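(* If the gapless condition (C) is not imposed, there is a series of instances, all on one fixed bipartite graph $G$ (with choice functions satisfying (A1)–(A3)), such that the weighted rotational posets $(\mathcal U,\tau,\triangleleft)$ representing the lattices of stable g-matchings have pseudo-polynomial sizes, namely $|\mathcal U|$ proportional to $b^{\max}=\max_e b(e)$, with $b^{\max}$ arbitrarily large.
   Context: An instance consists of a finite bipartite graph $G=(V,E)$ with color classes $W$ and $F$ (edge joining $w\in W$, $f\in F$ written $wf$), capacities $b\in\mathbb Z_+^E$, and for each $v\in V$ a choice function $C_v:\mathcal B_v\to\mathcal B_v$, where $E_v$ is the set of edges at $v$ and $\mathcal B_v=\{z\in\mathbb Z_+^{E_v}:z\le b|_{E_v}\}$, with $C_v(z)\le z$ and, for all $z,z'$: (A1) $z\ge z'\ge C_v(z)\Rightarrow C_v(z')=C_v(z)$; (A2) $z\ge z'\Rightarrow C_v(z)\wedge z'\le C_v(z')$; (A3) $z\ge z'\Rightarrow|C_v(z)|\ge|C_v(z')|$ ($\wedge$ = componentwise min, $|z|=\sum_e|z(e)|$, $\mathbf 1^e$ unit vector). $z$ is acceptable if $C_v(z)=z$; for distinct acceptable $z,z'$, $z'\prec_v z$ iff $C_v(z\vee z')=z$. A g-matching is $x\in\mathbb Z_+^E$, $x\le b$, with each restriction $x_v$ acceptable; $x\prec_F y$ (distinct) iff $x_f\preceq_f y_f$ for all $f\in F$. $e\in E_v$ is interesting for $v$ under acceptable $z$ if some $z'\in\mathcal B_v$ has $z'(e)>z(e)$, $z'(e')=z(e')$ for $e'\ne e$, $C_v(z')(e)>z(e)$;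 $e=wf$ blocks $x$ if interesting for $w$ under $x_w$ and for $f$ under $x_f$; stable g-matchings (no blocking edge) form a finite distributive lattice $\mathcal S$ under $\prec_F$ with minimum $x^{\min}$, maximum $x^{\max}$. Rotations at $x\in\mathcal S$: $U_F^+(x)$ = edges $wf$ interesting for $f$ under $x_f$; $U_F^-(x)$ = edges $wf$ with $x(wf)>0$ not interesting for $f$. Legal $f$-pair $(a,c)$: $a\in U_F^+(x)\cap E_f$, $c\in E_f\setminus\{a\}$, $C_f(x_f+\mathbf 1^a)=x_f+\mathbf 1^a-\mathbf 1^c$. Legal $w$-pair $(c,a)$: $c\in U_F^-(x)\cap E_w$, $a\in U_F^+(x)\cap E_w$, $x_w+\mathbf 1^a-\mathbf 1^c$ acceptable; essential if no $d\in(U_F^+(x)\cap E_w)\setminus\{a\}$ is interesting for $w$ under $x_w+\mathbf 1^a-\mathbf 1^c$. Digraph with vertices $w^e,f^e$ ($e=wf\in U_F^+(x)\cup U_F^-(x)$) and arcs $(w^a,f^a)$, $(f^c,w^c)$, $(f^a,f^c)$ for legal $f$-pairs, $(w^c,w^a)$ for essential $w$-pairs; after repeatedly deleting vertices with no entering arc, each directed cycle gives a rotation $R\in\mathcal R(x)$, a cyclic sequence $(a_1,c_1,\dots,a_k,c_k)$ of distinct edges with $\chi^R$ equal to $1$ on the $a_i$, $-1$ on the $c_i$. $\tau_R(x)$ is the maximum $\lambda$ with $x+i\chi^R\in\mathcal S$ for $i=1,\dots,\lambda$. A full route is $x^{\min}=x_0,\dots,x_N=x^{\max}$ with $x_i=x_{i-1}+\tau_{R_i}(x_{i-1})\chi^{R_i}$,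 $R_i\in\mathcal R(x_{i-1})$. The poset $\mathcal U$ consists of the labeled occurrences $R^{(j)}$ ($j$-th occurrence of rotation $R$ in a full route), weighted by the weights $\tau$ with which they are applied and ordered by $R_\alpha^{(i)}\triangleleft R_\beta^{(j)}$ iff in every full route the $i$-th occurrence of $R_\alpha$ precedes the $j$-th occurrence of $R_\beta$. Gapless condition (C) for $v$: if acceptable $z^1,z^2,z^3$ and edges $a,c^1,c^2,c^3\in E_v$ satisfy $z^1\prec_v z^2\prec_v z^3$, $C_v(z^i+\mathbf 1^a)=z^i+\mathbf 1^a-\mathbf 1^{c^i}$ ($i=1,2,3$), and $c^1=c^3$, then $c^1=c^2$. *)

theory Defs
  imports Complex_Main
begin

text \<open>Vectors on edges are functions from edges to nat; a vector at vertex v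
is supported on the edge set Ev of v (zero elsewhere).\<close>

definition vbox :: "'e set \<Rightarrow> ('e \<Rightarrow> nat) \<Rightarrow> ('e \<Rightarrow> nat) set" where
  "vbox Ev b = {z. (\<forall>e\<in>Ev. z e \<le> b e) \<and> (\<forall>e. e \<notin> Ev \<longrightarrow> z e = 0)}"

definition vnorm :: "'e set \<Rightarrow> ('e \<Rightarrow> nat) \<Rightarrow> nat" where
  "vnorm Ev z = (\<Sum>e\<in>Ev. z e)"

text \<open>C maps B_v to B_v, C z \<le> z, and axioms (A1),(A2),(A3).\<close>
definition choice_axioms ::
  "'e set \<Rightarrow> ('e \<Rightarrow> nat) \<Rightarrow> (('e \<Rightarrow> nat) \<Rightarrow> ('e \<Rightarrow> nat)) \<Rightarrow> bool" where
  "choice_axioms Ev b C \<longleftrightarrow>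
     (\<forall>z\<in>vbox Ev b. C z \<in> vbox Ev b \<and> C z \<le> z) \<and>
     (\<forall>z\<in>vbox Ev b. \<forall>z'\<in>vbox Ev b. z' \<le> z \<longrightarrow>
        ((C z \<le> z' \<longrightarrow> C z' = C z) \<and>
         inf (C z) z' \<le> C z' \<and>
         vnorm Ev (C z') \<le> vnorm Ev (C z)))"

definition acceptable ::
  "'e set \<Rightarrow> ('e \<Rightarrow> nat) \<Rightarrow> (('e \<Rightarrow> nat) \<Rightarrow> ('e \<Rightarrow> nat)) \<Rightarrow> ('e \<Rightarrow> nat) \<Rightarrow> bool" where
  "acceptable Ev b C z \<longleftrightarrow> z \<in> vbox Ev b \<and> C z = z"

text \<open>vprec Ev b C z' z  means  z' \<prec>_v z.\<close>
definition vprec ::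
  "'e set \<Rightarrow> ('e \<Rightarrow> nat) \<Rightarrow> (('e \<Rightarrow> nat) \<Rightarrow> ('e \<Rightarrow> nat)) \<Rightarrow> ('e \<Rightarrow> nat) \<Rightarrow> ('e \<Rightarrow> nat) \<Rightarrow> bool" where
  "vprec Ev b C z' z \<longleftrightarrow> acceptable Ev b C z \<and> acceptable Ev b C z' \<and> z \<noteq> z' \<and> C (sup z z') = z"

definition vpreceq ::
  "'e set \<Rightarrow> ('e \<Rightarrow> nat) \<Rightarrow> (('e \<Rightarrow> nat) \<Rightarrow> ('e \<Rightarrow> nat)) \<Rightarrow> ('e \<Rightarrow> nat) \<Rightarrow> ('e \<Rightarrow> nat) \<Rightarrow> bool" where
  "vpreceq Ev b C z' z \<longleftrightarrow> z' = z \<or> vprec Ev b C z' z"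

definition interesting ::
  "'e set \<Rightarrow> ('e \<Rightarrow> nat) \<Rightarrow> (('e \<Rightarrow> nat) \<Rightarrow> ('e \<Rightarrow> nat)) \<Rightarrow> ('e \<Rightarrow> nat) \<Rightarrow> 'e \<Rightarrow> bool" where
  "interesting Ev b C z e \<longleftrightarrow> e \<in> Ev \<and>
     (\<exists>z'\<in>vbox Ev b. z' e > z e \<and> (\<forall>e'. e' \<noteq> e \<longrightarrow> z' e' = z e') \<and> C z' e > z e)"

definition unitv :: "'e \<Rightarrow> 'e \<Rightarrow> nat" where
  "unitv a = (\<lambda>e. if e = a then 1 else 0)"

definition restr :: "'e set \<Rightarrow> ('e \<Rightarrow> nat) \<Rightarrow> ('e \<Rightarrow> nat)" where
  "restr A x = (\<lambda>e. if e \<in> A then x e else 0)"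

record ('w, 'f) ginst =
  Wv :: "'w set"
  Fv :: "'f set"
  Ed :: "('w \<times> 'f) set"
  cap :: "('w \<times> 'f) \<Rightarrow> nat"
  chW :: "'w \<Rightarrow> (('w \<times> 'f) \<Rightarrow> nat) \<Rightarrow> (('w \<times> 'f) \<Rightarrow> nat)"
  chF :: "'f \<Rightarrow> (('w \<times> 'f) \<Rightarrow> nat) \<Rightarrow> (('w \<times> 'f) \<Rightarrow> nat)"

definition Ew :: "('w, 'f) ginst \<Rightarrow> 'w \<Rightarrow> ('w \<times> 'f) set" where
  "Ew I w = {e \<in> Ed I. fst e = w}"

definition Ef :: "('w, 'f) ginst \<Rightarrow> 'f \<Rightarrow> ('w \<times> 'f) set" where
  "Ef I f = {e \<in> Ed I. snd e = f}"

definition valid_instance :: "('w, 'f) ginst \<Rightarrow> bool" where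
  "valid_instance I \<longleftrightarrow> finite (Wv I) \<and> finite (Fv I) \<and> Ed I \<subseteq> Wv I \<times> Fv I \<and>
     (\<forall>w\<in>Wv I. choice_axioms (Ew I w) (cap I) (chW I w)) \<and>
     (\<forall>f\<in>Fv I. choice_axioms (Ef I f) (cap I) (chF I f))"

definition bmax :: "('w, 'f) ginst \<Rightarrow> nat" where
  "bmax I = Max (cap I ` Ed I)"

definition gmatching :: "('w, 'f) ginst \<Rightarrow> (('w \<times> 'f) \<Rightarrow> nat) \<Rightarrow> bool" where
  "gmatching I x \<longleftrightarrow> (\<forall>e. e \<notin> Ed I \<longrightarrow> x e = 0) \<and> (\<forall>e\<in>Ed I. x e \<le> cap I e) \<and>
     (\<forall>w\<in>Wv I. acceptable (Ew I w) (cap I) (chW I w) (restr (Ew I w) x)) \<and>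
     (\<forall>f\<in>Fv I. acceptable (Ef I f) (cap I) (chF I f) (restr (Ef I f) x))"

definition interesting_w :: "('w, 'f) ginst \<Rightarrow> (('w \<times> 'f) \<Rightarrow> nat) \<Rightarrow> ('w \<times> 'f) \<Rightarrow> bool" where
  "interesting_w I z e = interesting (Ew I (fst e)) (cap I) (chW I (fst e)) (restr (Ew I (fst e)) z) e"

definition interesting_f :: "('w, 'f) ginst \<Rightarrow> (('w \<times> 'f) \<Rightarrow> nat) \<Rightarrow> ('w \<times> 'f) \<Rightarrow> bool" where
  "interesting_f I z e = interesting (Ef I (snd e)) (cap I) (chF I (snd e)) (restr (Ef I (snd e)) z) e"

definition blocking :: "('w, 'f) ginst \<Rightarrow> (('w \<times> 'f) \<Rightarrow> nat) \<Rightarrow> ('w \<times> 'f) \<Rightarrow> bool" where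
  "blocking I x e \<longleftrightarrow> e \<in> Ed I \<and> interesting_w I x e \<and> interesting_f I x e"

definition stable :: "('w, 'f) ginst \<Rightarrow> (('w \<times> 'f) \<Rightarrow> nat) \<Rightarrow> bool" where
  "stable I x \<longleftrightarrow> gmatching I x \<and> \<not> (\<exists>e. blocking I x e)"

definition precF_eq :: "('w, 'f) ginst \<Rightarrow> (('w \<times> 'f) \<Rightarrow> nat) \<Rightarrow> (('w \<times> 'f) \<Rightarrow> nat) \<Rightarrow> bool" where
  "precF_eq I x y \<longleftrightarrow> x = y \<or>
     (\<forall>f\<in>Fv I. vpreceq (Ef I f) (cap I) (chF I f) (restr (Ef I f) x) (restr (Ef I f) y))"

definition is_xmin :: "('w, 'f) ginst \<Rightarrow> (('w \<times> 'f) \<Rightarrow> nat) \<Rightarrow> bool" where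
  "is_xmin I x \<longleftrightarrow> stable I x \<and> (\<forall>y. stable I y \<longrightarrow> precF_eq I x y)"

definition is_xmax :: "('w, 'f) ginst \<Rightarrow> (('w \<times> 'f) \<Rightarrow> nat) \<Rightarrow> bool" where
  "is_xmax I x \<longleftrightarrow> stable I x \<and> (\<forall>y. stable I y \<longrightarrow> precF_eq I y x)"

definition Uplus :: "('w, 'f) ginst \<Rightarrow> (('w \<times> 'f) \<Rightarrow> nat) \<Rightarrow> ('w \<times> 'f) set" where
  "Uplus I x = {e \<in> Ed I. interesting_f I x e}"

definition Uminus :: "('w, 'f) ginst \<Rightarrow> (('w \<times> 'f) \<Rightarrow> nat) \<Rightarrow> ('w \<times> 'f) set" where
  "Uminus I x = {e \<in> Ed I. 0 < x e \<and> \<not> interesting_f I x e}"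

definition legal_fpair :: "('w, 'f) ginst \<Rightarrow> (('w \<times> 'f) \<Rightarrow> nat) \<Rightarrow> ('w \<times> 'f) \<Rightarrow> ('w \<times> 'f) \<Rightarrow> bool" where
  "legal_fpair I x a c \<longleftrightarrow>
     a \<in> Uplus I x \<and> c \<in> Ef I (snd a) \<and> c \<noteq> a \<and>
     (\<forall>e. int (chF I (snd a) (\<lambda>e'. restr (Ef I (snd a)) x e' + unitv a e') e)
          = int (restr (Ef I (snd a)) x e) + int (unitv a e) - int (unitv c e))"

text \<open>Legal w-pair (c,a) for w = fst c (here x(c) > 0 and c \<noteq> a, so the
natural-number subtraction is exact).\<close>
definition legal_wpair :: "('w, 'f) ginst \<Rightarrow> (('w \<times> 'f) \<Rightarrow> nat) \<Rightarrow> ('w \<times> 'f) \<Rightarrow> ('w \<times> 'f) \<Rightarrow> bool" where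
  "legal_wpair I x c a \<longleftrightarrow>
     c \<in> Uminus I x \<and> a \<in> Uplus I x \<and> fst a = fst c \<and>
     acceptable (Ew I (fst c)) (cap I) (chW I (fst c))
       (\<lambda>e. restr (Ew I (fst c)) x e + unitv a e - unitv c e)"

definition essential_wpair :: "('w, 'f) ginst \<Rightarrow> (('w \<times> 'f) \<Rightarrow> nat) \<Rightarrow> ('w \<times> 'f) \<Rightarrow> ('w \<times> 'f) \<Rightarrow> bool" where
  "essential_wpair I x c a \<longleftrightarrow> legal_wpair I x c a \<and>
     \<not> (\<exists>d \<in> Uplus I x. fst d = fst c \<and> d \<noteq> a \<and>
          interesting (Ew I (fst c)) (cap I) (chW I (fst c))
            (\<lambda>e. restr (Ew I (fst c)) x e + unitv a e - unitv c e) d)"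

text \<open>Vertices w^e and f^e of the auxiliary digraph.\<close>
datatype 'e rvert = WV 'e | FV 'e

definition rverts :: "('w, 'f) ginst \<Rightarrow> (('w \<times> 'f) \<Rightarrow> nat) \<Rightarrow> ('w \<times> 'f) rvert set" where
  "rverts I x = WV ` (Uplus I x \<union> Uminus I x) \<union> FV ` (Uplus I x \<union> Uminus I x)"

definition rarc :: "('w, 'f) ginst \<Rightarrow> (('w \<times> 'f) \<Rightarrow> nat) \<Rightarrow> ('w \<times> 'f) rvert \<Rightarrow> ('w \<times> 'f) rvert \<Rightarrow> bool" where
  "rarc I x u v \<longleftrightarrow> u \<in> rverts I x \<and> v \<in> rverts I x \<and>
     ((\<exists>a\<in>Uplus I x. u = WV a \<and> v = FV a) \<or>
      (\<exists>c\<in>Uminus I x. u = FV c \<and> v = WV c) \<or>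
      (\<exists>a c. legal_fpair I x a c \<and> u = FV a \<and> v = FV c) \<or>
      (\<exists>c a. essential_wpair I x c a \<and> u = WV c \<and> v = WV a))"

text \<open>A rotation at a stable x: a cyclic sequence (a_1,c_1,...,a_k,c_k) of
distinct edges (stored as the list of pairs (a_i,c_i)) such that
w^{a_1} f^{a_1} f^{c_1} w^{c_1} w^{a_2} ... w^{c_k} w^{a_1} is a directed
cycle of the digraph (such cycles survive the pruning of vertices without
entering arcs).\<close>
definition is_rotation :: "('w, 'f) ginst \<Rightarrow> (('w \<times> 'f) \<Rightarrow> nat) \<Rightarrow> (('w \<times> 'f) \<times> ('w \<times> 'f)) list \<Rightarrow> bool" where
  "is_rotation I x R \<longleftrightarrow> stable I x \<and> R \<noteq> [] \<and>
     distinct (concat (map (\<lambda>(a, c). [a, c]) R)) \<and>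
     (\<forall>i < length R.
        rarc I x (WV (fst (R ! i))) (FV (fst (R ! i))) \<and>
        rarc I x (FV (fst (R ! i))) (FV (snd (R ! i))) \<and>
        rarc I x (FV (snd (R ! i))) (WV (snd (R ! i))) \<and>
        rarc I x (WV (snd (R ! i))) (WV (fst (R ! (Suc i mod length R)))))"

definition chi :: "(('w \<times> 'f) \<times> ('w \<times> 'f)) list \<Rightarrow> ('w \<times> 'f) \<Rightarrow> int" where
  "chi R e = (if e \<in> fst ` set R then 1 else if e \<in> snd ` set R then -1 else 0)"

definition shift_ok :: "('w, 'f) ginst \<Rightarrow> (('w \<times> 'f) \<Rightarrow> nat) \<Rightarrow> (('w \<times> 'f) \<times> ('w \<times> 'f)) list \<Rightarrow> nat \<Rightarrow> bool" where
  "shift_ok I x R i \<longleftrightarrow> (\<forall>e. 0 \<le> int (x e) + int i * chi R e) \<and>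
     stable I (\<lambda>e. nat (int (x e) + int i * chi R e))"

definition shifted :: "(('w \<times> 'f) \<Rightarrow> nat) \<Rightarrow> (('w \<times> 'f) \<times> ('w \<times> 'f)) list \<Rightarrow> nat \<Rightarrow> (('w \<times> 'f) \<Rightarrow> nat)" where
  "shifted x R i = (\<lambda>e. nat (int (x e) + int i * chi R e))"

definition tau :: "('w, 'f) ginst \<Rightarrow> (('w \<times> 'f) \<Rightarrow> nat) \<Rightarrow> (('w \<times> 'f) \<times> ('w \<times> 'f)) list \<Rightarrow> nat" where
  "tau I x R = (GREATEST l. \<forall>i \<in> {1..l}. shift_ok I x R i)"

definition full_route :: "('w, 'f) ginst \<Rightarrow> (('w \<times> 'f) \<Rightarrow> nat) list \<Rightarrow> (('w \<times> 'f) \<times> ('w \<times> 'f)) list list \<Rightarrow> bool" where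
  "full_route I xs Rs \<longleftrightarrow> length xs = Suc (length Rs) \<and>
     is_xmin I (xs ! 0) \<and> is_xmax I (last xs) \<and>
     (\<forall>i < length Rs. is_rotation I (xs ! i) (Rs ! i) \<and>
        xs ! Suc i = shifted (xs ! i) (Rs ! i) (tau I (xs ! i) (Rs ! i)))"

text \<open>A rotation is a cyclic sequence: identify lists up to cyclic shift.\<close>
definition rot_class :: "'a list \<Rightarrow> 'a list set" where
  "rot_class R = {rotate n R | n. True}"

text \<open>The ground set of the rotational poset: labelled occurrences R^(j),
the j-th occurrence of rotation R in a full route.\<close>
definition rot_poset :: "('w, 'f) ginst \<Rightarrow> ((('w \<times> 'f) \<times> ('w \<times> 'f)) list set \<times> nat) set" where
  "rot_poset I = {(rot_class R, j) | R j. \<exists>xs Rs. full_route I xs Rs \<and> 1 \<le> j \<and>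
      j \<le> card {i. i < length Rs \<and> rot_class (Rs ! i) = rot_class R}}"

end

theory Submission
  imports Defs
begin

text \<open>
  All instances live on one graph: worker 2 is joined to firm 2 by \<open>eA\<close> and to firm 3
  by \<open>eD\<close>; workers 3 and 4 are joined to firm 2 by \<open>eC2\<close>, \<open>eC3\<close> and to firm 3 by
  \<open>eB2\<close>, \<open>eB3\<close>.  For the parameter \<open>k\<close>, the edges \<open>eA\<close>, \<open>eD\<close> have capacity \<open>2k\<close> and
  the others capacity \<open>k\<close>.  Every vertex fills a quota greedily along a priority order,
  except firm 2, which serves \<open>eA\<close> first and then splits its remaining quota evenly
  between \<open>eC2\<close> and \<open>eC3\<close>; this even split violates (C).

  The stable g-matchings form a chain \<open>x\<^sub>0 \<prec> \<dots> \<prec> x\<^sub>2\<^sub>k\<close> in which \<open>x\<^sub>j\<close> gives \<open>j\<close> units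
  to \<open>eA\<close>.  Every step is a rotation of weight one, and the unit that firm 2 releases to
  make room for \<open>eA\<close> comes alternately from \<open>eC2\<close> and from \<open>eC3\<close>.  So there are exactly two
  rotations, each occurring \<open>k\<close> times on every full route, and \<open>|\<U>| = 2k = b\<^sup>m\<^sup>a\<^sup>x\<close>.
\<close>

lemma le_fun_iff_on_support:
  fixes f g :: "'e \<Rightarrow> nat"
  assumes "\<forall>e. e \<notin> A \<longrightarrow> f e = 0"
  shows "f \<le> g \<longleftrightarrow> (\<forall>e\<in>A. f e \<le> g e)"
  using assms by (auto simp: le_fun_def)

lemma fun_eq_iff_on_support:
  assumes "\<forall>e. e \<notin> A \<longrightarrow> f e = 0" "\<forall>e. e \<notin> A \<longrightarrow> g e = 0"
  shows "f = g \<longleftrightarrow> (\<forall>e\<in>A. f e = g e)"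
  using assms by (auto simp: fun_eq_iff)

lemma interesting_iff_update:
  assumes "z \<in> vbox Ev b" "e \<in> Ev"
  shows "interesting Ev b C z e \<longleftrightarrow> (\<exists>t. z e < t \<and> t \<le> b e \<and> z e < C (z(e := t)) e)"
proof
  assume "interesting Ev b C z e"
  then obtain z' where z': "z' \<in> vbox Ev b" "z e < z' e" "\<forall>e'. e' \<noteq> e \<longrightarrow> z' e' = z e'"
      "z e < C z' e"
    unfolding interesting_def by blast
  have "z' = z(e := z' e)" using z'(3) by auto
  then show "\<exists>t. z e < t \<and> t \<le> b e \<and> z e < C (z(e := t)) e"
    using z' assms by (intro exI[of _ "z' e"]) (auto simp: vbox_def)
next
  assume "\<exists>t. z e < t \<and> t \<le> b e \<and> z e < C (z(e := t)) e"
  then obtain t where "z e < t" "t \<le> b e" "z e < C (z(e := t)) e" by blast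
  then show "interesting Ev b C z e"
    using assms unfolding interesting_def
    by (intro conjI bexI[of _ "z(e := t)"]) (auto simp: vbox_def)
qed

lemma interesting_iff_capped:
  assumes "z \<in> vbox Ev b" "e \<in> Ev" "\<And>t. C (z(e := t)) e = min t r"
  shows "interesting Ev b C z e \<longleftrightarrow> z e < b e \<and> z e < r"
  using assms by (subst interesting_iff_update) (auto intro: exI[of _ "Suc (z e)"])

section \<open>Quota-filling choice functions\<close>

type_synonym 'e quota_choice = "nat \<Rightarrow> ('e \<Rightarrow> nat) \<Rightarrow> ('e \<Rightarrow> nat)"

text \<open>Each member of a quota family chooses \<open>min |z| R\<close> units and satisfies (A1), and (A2)
  holds even across a growing quota.  The families are closed under serving one more edge
  first, which is how all choice functions of the instance are built.\<close>
definition quota_family :: "'e set \<Rightarrow> 'e quota_choice \<Rightarrow> bool" where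
  "quota_family A C \<longleftrightarrow> finite A \<and>
     (\<forall>R z. (\<forall>e. e \<notin> A \<longrightarrow> C R z e = 0) \<and> C R z \<le> z \<and> vnorm A (C R z) = min (vnorm A z) R) \<and>
     (\<forall>R z z'. z' \<le> z \<longrightarrow> C R z \<le> z' \<longrightarrow> C R z' = C R z) \<and>
     (\<forall>R R' z z'. R \<le> R' \<longrightarrow> z' \<le> z \<longrightarrow> inf (C R z) z' \<le> C R' z')"

lemma quota_familyD:
  assumes "quota_family A C"
  shows "finite A" "e \<notin> A \<Longrightarrow> C R z e = 0" "C R z \<le> z"
    "vnorm A (C R z) = min (vnorm A z) R"
    "z' \<le> z \<Longrightarrow> C R z \<le> z' \<Longrightarrow> C R z' = C R z"
    "R \<le> R' \<Longrightarrow> z' \<le> z \<Longrightarrow> inf (C R z) z' \<le> C R' z'"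
  using assms unfolding quota_family_def by auto

lemma choice_axioms_quota_family:
  fixes C :: "'e quota_choice"
  assumes "quota_family A C"
  shows "choice_axioms A b (C Q)"
  unfolding choice_axioms_def
proof (intro conjI ballI impI)
  fix z assume "z \<in> vbox A b"
  then show "C Q z \<in> vbox A b"
    using quota_familyD(2)[OF assms] le_funD[OF quota_familyD(3)[OF assms]]
    unfolding vbox_def by (blast intro: order_trans)
  show "C Q z \<le> z" by (rule quota_familyD(3)[OF assms])
next
  fix z z' :: "'e \<Rightarrow> nat" assume "z' \<le> z"
  then show "C Q z \<le> z' \<Longrightarrow> C Q z' = C Q z"
    by (rule quota_familyD(5)[OF assms])
  show "inf (C Q z) z' \<le> C Q z'"
    using \<open>z' \<le> z\<close> by (rule quota_familyD(6)[OF assms order_refl])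
  have "vnorm A z' \<le> vnorm A z"
    using \<open>z' \<le> z\<close> unfolding vnorm_def by (simp add: le_fun_def sum_mono)
  then show "vnorm A (C Q z') \<le> vnorm A (C Q z)"
    by (simp add: quota_familyD(4)[OF assms])
qed

lemma acceptable_quota_family_iff:
  assumes C: "quota_family A C" and z: "z \<in> vbox A b"
  shows "acceptable A b (C Q) z \<longleftrightarrow> vnorm A z \<le> Q"
proof
  assume "acceptable A b (C Q) z"
  then have "vnorm A z = min (vnorm A z) Q"
    unfolding acceptable_def using quota_familyD(4)[OF C, of Q z] by simp
  then show "vnorm A z \<le> Q" by linarith
next
  assume "vnorm A z \<le> Q"
  then have sums: "sum (C Q z) A = sum z A"
    using quota_familyD(4)[OF C, of Q z] by (simp add: vnorm_def)
  have "C Q z e = z e" if "e \<in> A" for e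
    using sum_mono_inv[OF sums le_funD[OF quota_familyD(3)[OF C]] that quota_familyD(1)[OF C]] .
  moreover have "\<forall>e. e \<notin> A \<longrightarrow> z e = 0" using z by (simp add: vbox_def)
  ultimately have "C Q z = z"
    using quota_familyD(2)[OF C] by (subst fun_eq_iff_on_support[of A]) auto
  then show "acceptable A b (C Q) z" using z by (simp add: acceptable_def)
qed

definition take_first :: "'e \<Rightarrow> 'e quota_choice \<Rightarrow> 'e quota_choice" where
  "take_first p C R z = (C (R - min (z p) R) z)(p := min (z p) R)"

definition priority :: "'e list \<Rightarrow> 'e quota_choice" where
  "priority ps = foldr take_first ps (\<lambda>R z e. 0)"

lemma quota_family_empty: "quota_family {} (\<lambda>R z e. 0)"
  by (simp add: quota_family_def vnorm_def le_fun_def inf_fun_def inf_nat_def)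

lemma take_first_apply:
  "take_first p C R z p = min (z p) R"
  "e \<noteq> p \<Longrightarrow> take_first p C R z e = C (R - min (z p) R) z e"
  by (simp_all add: take_first_def)

lemma take_first_le:
  assumes "quota_family A C"
  shows "take_first p C R z \<le> z"
proof (rule le_funI)
  fix e show "take_first p C R z e \<le> z e"
    by (cases "e = p") (simp_all add: take_first_apply le_funD[OF quota_familyD(3)[OF assms]])
qed

lemma vnorm_take_first:
  assumes C: "quota_family A C" and p: "p \<notin> A"
  shows "vnorm (insert p A) (take_first p C R z) = min (vnorm (insert p A) z) R"
proof -
  have fin: "finite A" by (rule quota_familyD(1)[OF C])
  have "sum (take_first p C R z) A = sum (C (R - min (z p) R) z) A"
    using p by (intro sum.cong refl take_first_apply(2)) auto
  then have "vnorm (insert p A) (take_first p C R z)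
      = min (z p) R + vnorm A (C (R - min (z p) R) z)"
    using fin p by (simp add: vnorm_def take_first_apply)
  also have "\<dots> = min (z p + vnorm A z) R"
    by (simp add: quota_familyD(4)[OF C])
  finally show ?thesis using fin p by (simp add: vnorm_def)
qed

lemma take_first_consistent:
  assumes C: "quota_family A C" and p: "p \<notin> A"
    and "z' \<le> z" "take_first p C R z \<le> z'"
  shows "take_first p C R z' = take_first p C R z"
proof -
  have "min (z p) R \<le> z' p" "z' p \<le> z p"
    using le_funD[OF assms(4), of p] le_funD[OF assms(3), of p] by (simp_all add: take_first_apply)
  then have same_p: "min (z' p) R = min (z p) R" by linarith
  have "C (R - min (z p) R) z \<le> z'"
  proof (rule le_funI)
    fix e show "C (R - min (z p) R) z e \<le> z' e"
      using le_funD[OF assms(4), of e] quota_familyD(2)[OF C p]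
      by (cases "e = p") (simp_all add: take_first_apply)
  qed
  then have "C (R - min (z p) R) z' = C (R - min (z p) R) z"
    by (rule quota_familyD(5)[OF C assms(3)])
  then show ?thesis unfolding take_first_def same_p by simp
qed

lemma take_first_substitutable:
  assumes C: "quota_family A C" and "R \<le> R'" "z' \<le> z"
  shows "inf (take_first p C R z) z' \<le> take_first p C R' z'"
proof (rule le_funI)
  fix e
  have "R - min (z p) R \<le> R' - min (z' p) R'"
    using assms(2) le_funD[OF assms(3), of p] by linarith
  then have "inf (C (R - min (z p) R) z) z' e \<le> C (R' - min (z' p) R') z' e"
    using le_funD[OF quota_familyD(6)[OF C _ assms(3)]] by blast
  then show "inf (take_first p C R z) z' e \<le> take_first p C R' z' e"
    using assms(2) by (cases "e = p") (simp_all add: take_first_apply inf_nat_def)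
qed

lemma quota_family_take_first:
  assumes C: "quota_family A C" and p: "p \<notin> A"
  shows "quota_family (insert p A) (take_first p C)"
proof -
  have "\<forall>e. e \<notin> insert p A \<longrightarrow> take_first p C R z e = 0" for R z
    using quota_familyD(2)[OF C] by (simp add: take_first_apply)
  then show ?thesis
    using quota_familyD(1)[OF C] take_first_le[OF C] vnorm_take_first[OF C p]
      take_first_consistent[OF C p] take_first_substitutable[OF C]
    unfolding quota_family_def by blast
qed

lemma quota_family_priority: "distinct ps \<Longrightarrow> quota_family (set ps) (priority ps)"
  by (induction ps) (simp_all add: priority_def quota_family_empty quota_family_take_first)

text \<open>Cut the demands \<open>(zq, zs)\<close> down to a total of at most \<open>h + g\<close>; a side may
  exceed its share (\<open>h\<close> resp. \<open>g\<close>) only by what the other side leaves unused.\<close>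
definition share_fst :: "nat \<Rightarrow> nat \<Rightarrow> nat \<Rightarrow> nat \<Rightarrow> nat" where
  "share_fst h g zq zs =
     (if zq + zs \<le> h + g \<or> zq \<le> h then zq else if zs \<le> g then h + g - zs else h)"

definition share_snd :: "nat \<Rightarrow> nat \<Rightarrow> nat \<Rightarrow> nat \<Rightarrow> nat" where
  "share_snd h g zq zs =
     (if zq + zs \<le> h + g \<or> zs \<le> g then zs else if zq \<le> h then h + g - zq else g)"

lemma share_le: "share_fst h g zq zs \<le> zq" "share_snd h g zq zs \<le> zs"
  unfolding share_fst_def share_snd_def by auto

lemma share_sum: "share_fst h g zq zs + share_snd h g zq zs = min (zq + zs) (h + g)"
  unfolding share_fst_def share_snd_def by auto

lemma share_of_ge: "h \<le> zq \<Longrightarrow> g \<le> zs \<Longrightarrow> share_fst h g zq zs = h \<and> share_snd h g zq zs = g"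
  unfolding share_fst_def share_snd_def by auto

lemma share_consistent:
  assumes "zq' \<le> zq" "zs' \<le> zs" "share_fst h g zq zs \<le> zq'" "share_snd h g zq zs \<le> zs'"
  shows "share_fst h g zq' zs' = share_fst h g zq zs \<and> share_snd h g zq' zs' = share_snd h g zq zs"
  using assms unfolding share_fst_def share_snd_def by (auto split: if_splits)

lemma share_substitutable:
  assumes "zq' \<le> zq" "zs' \<le> zs" "h \<le> h'" "g \<le> g'"
  shows "min (share_fst h g zq zs) zq' \<le> share_fst h' g' zq' zs'"
    "min (share_snd h g zq zs) zs' \<le> share_snd h' g' zq' zs'"
  using assms unfolding share_fst_def share_snd_def by (auto split: if_splits)

definition even_split :: "'e \<Rightarrow> 'e \<Rightarrow> 'e quota_choice" where
  "even_split q s R z = (\<lambda>e.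
     if e = q then share_fst (R div 2) (R - R div 2) (z q) (z s)
     else if e = s then share_snd (R div 2) (R - R div 2) (z q) (z s) else 0)"

lemma quota_family_even_split:
  assumes "q \<noteq> s"
  shows "quota_family {q, s} (even_split q s)"
proof -
  have at_q: "even_split q s R z q = share_fst (R div 2) (R - R div 2) (z q) (z s)"
    and at_s: "even_split q s R z s = share_snd (R div 2) (R - R div 2) (z q) (z s)" for R z
    using assms by (simp_all add: even_split_def)
  have supp: "\<forall>e. e \<notin> {q, s} \<longrightarrow> even_split q s R z e = 0" for R z
    by (simp add: even_split_def)
  have "even_split q s R z \<le> z" for R z
    using share_le supp by (subst le_fun_iff_on_support[of "{q, s}"]) (auto simp: at_q at_s)
  moreover have "vnorm {q, s} (even_split q s R z) = min (vnorm {q, s} z) R" for R z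
    using assms share_sum[of "R div 2" "R - R div 2" "z q" "z s"]
    by (simp add: vnorm_def at_q at_s)
  moreover have "even_split q s R z' = even_split q s R z"
    if "z' \<le> z" "even_split q s R z \<le> z'" for R z z'
    using share_consistent[OF le_funD[OF that(1)] le_funD[OF that(1)]
        le_funD[OF that(2), of q, unfolded at_q] le_funD[OF that(2), of s, unfolded at_s]]
    by (subst fun_eq_iff_on_support[OF supp supp]) (simp add: at_q at_s)
  moreover have "inf (even_split q s R z) z' \<le> even_split q s R' z'"
    if "R \<le> R'" "z' \<le> z" for R R' z z'
  proof -
    have "R div 2 \<le> R' div 2" "R - R div 2 \<le> R' - R' div 2"
      using that(1) by (simp add: div_le_mono, linarith)
    from share_substitutable[OF le_funD[OF that(2)] le_funD[OF that(2)] this] show ?thesis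
      by (subst le_fun_iff_on_support[of "{q, s}"])
        (auto simp: at_q at_s inf_fun_def inf_nat_def supp)
  qed
  ultimately show ?thesis
    using supp unfolding quota_family_def by blast
qed

lemma priority_apply:
  assumes "distinct (us @ e # vs)"
  shows "priority (us @ e # vs) R z e = min (z e) (R - min (sum_list (map z us)) R)"
  using assms
proof (induction us arbitrary: R)
  case Nil
  then show ?case by (simp add: priority_def take_first_def)
next
  case (Cons u us)
  then have "priority (u # us @ e # vs) R z e = priority (us @ e # vs) (R - min (z u) R) z e"
    by (auto simp: priority_def take_first_def)
  also have "\<dots> = min (z e) (R - min (z u + sum_list (map z us)) R)"
    using Cons by (simp add: min_def)
  finally show ?case by simp
qed

lemma interesting_priority_iff:
  assumes "distinct (us @ e # vs)" "z \<in> vbox (set (us @ e # vs)) b"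
  shows "interesting (set (us @ e # vs)) b (priority (us @ e # vs) R) z e \<longleftrightarrow>
    z e < b e \<and> z e < R - min (sum_list (map z us)) R"
proof (rule interesting_iff_capped[OF assms(2)])
  fix t
  have "map (z(e := t)) us = map z us" using assms(1) by (intro map_cong) auto
  then show "priority (us @ e # vs) R (z(e := t)) e = min t (R - min (sum_list (map z us)) R)"
    by (simp only: priority_apply[OF assms(1)] fun_upd_same)
qed simp

lemma interesting_take_first_head_iff:
  assumes "z \<in> vbox Ev b" "p \<in> Ev"
  shows "interesting Ev b (take_first p C R) z p \<longleftrightarrow> z p < b p \<and> z p < R"
  using assms by (intro interesting_iff_capped) (simp_all add: take_first_def)

lemma ex_share_fst_increase:
  assumes "zq + zs \<le> h + g"
  shows "(\<exists>t. zq < t \<and> t \<le> B \<and> zq < share_fst h g t zs) \<longleftrightarrow> zq < B \<and> (zq + zs < h + g \<or> zq < h)"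
proof
  assume "\<exists>t. zq < t \<and> t \<le> B \<and> zq < share_fst h g t zs"
  then show "zq < B \<and> (zq + zs < h + g \<or> zq < h)"
    using assms unfolding share_fst_def by (auto split: if_splits)
next
  assume "zq < B \<and> (zq + zs < h + g \<or> zq < h)"
  then show "\<exists>t. zq < t \<and> t \<le> B \<and> zq < share_fst h g t zs"
    using assms unfolding share_fst_def by (intro exI[of _ "Suc zq"]) auto
qed

lemma ex_share_snd_increase:
  assumes "zq + zs \<le> h + g"
  shows "(\<exists>t. zs < t \<and> t \<le> B \<and> zs < share_snd h g zq t) \<longleftrightarrow> zs < B \<and> (zq + zs < h + g \<or> h < zq)"
proof
  assume "\<exists>t. zs < t \<and> t \<le> B \<and> zs < share_snd h g zq t"
  then show "zs < B \<and> (zq + zs < h + g \<or> h < zq)"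
    using assms unfolding share_snd_def by (auto split: if_splits)
next
  assume "zs < B \<and> (zq + zs < h + g \<or> h < zq)"
  then show "\<exists>t. zs < t \<and> t \<le> B \<and> zs < share_snd h g zq t"
    using assms unfolding share_snd_def by (intro exI[of _ "Suc zs"]) auto
qed

lemma restr_in_vbox: "\<forall>e\<in>Ev. x e \<le> b e \<Longrightarrow> restr Ev x \<in> vbox Ev b"
  by (simp add: restr_def vbox_def)

lemma acceptable_restr_iff:
  assumes "quota_family Ev C" "\<forall>e\<in>Ev. x e \<le> b e"
  shows "acceptable Ev b (C Q) (restr Ev x) \<longleftrightarrow> sum x Ev \<le> Q"
proof -
  have "vnorm Ev (restr Ev x) = sum x Ev" by (simp add: vnorm_def restr_def)
  then show ?thesis
    using acceptable_quota_family_iff[OF assms(1) restr_in_vbox[OF assms(2)]] by simp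
qed

lemma rarc_WV_FV: "rarc I x (WV a) (FV b) \<Longrightarrow> b = a \<and> a \<in> Uplus I x"
  and rarc_FV_FV: "rarc I x (FV a) (FV c) \<Longrightarrow> legal_fpair I x a c"
  and rarc_WV_WV: "rarc I x (WV c) (WV a) \<Longrightarrow> essential_wpair I x c a"
  by (auto simp: rarc_def)

lemma rarc_WV_FV_I: "a \<in> Uplus I x \<Longrightarrow> rarc I x (WV a) (FV a)"
  and rarc_FV_WV_I: "c \<in> Uminus I x \<Longrightarrow> rarc I x (FV c) (WV c)"
  by (auto simp: rarc_def rverts_def)

lemma rarc_FV_FV_I:
  "legal_fpair I x a c \<Longrightarrow> c \<in> Uminus I x \<Longrightarrow> rarc I x (FV a) (FV c)"
  unfolding rarc_def rverts_def legal_fpair_def by blast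

lemma rarc_WV_WV_I:
  "essential_wpair I x c a \<Longrightarrow> rarc I x (WV c) (WV a)"
  unfolding rarc_def rverts_def essential_wpair_def legal_wpair_def by blast

lemma int_exchange_eq_iff:
  fixes y :: "'e \<Rightarrow> nat"
  assumes "1 \<le> y p" "p \<noteq> a"
  shows "(\<forall>e. int (y e + unitv a e - unitv p e) = int (y e) + int (unitv a e) - int (unitv c e))
    \<longleftrightarrow> c = p"
proof
  assume "\<forall>e. int (y e + unitv a e - unitv p e) = int (y e) + int (unitv a e) - int (unitv c e)"
  then have "int (y p + unitv a p - unitv p p) = int (y p) + int (unitv a p) - int (unitv c p)"
    by blast
  moreover have "unitv a p = 0" "unitv p p = 1" using assms(2) by (auto simp: unitv_def)
  ultimately have "int (unitv c p) = 1" using assms(1) by (simp add: of_nat_diff)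
  then show "c = p" by (simp add: unitv_def split: if_splits)
next
  assume "c = p"
  show "\<forall>e. int (y e + unitv a e - unitv p e) = int (y e) + int (unitv a e) - int (unitv c e)"
  proof
    fix e
    show "int (y e + unitv a e - unitv p e) = int (y e) + int (unitv a e) - int (unitv c e)"
      using assms \<open>c = p\<close> by (cases "e = p") (simp_all add: unitv_def of_nat_diff)
  qed
qed

lemma legal_fpair_iff_rejected:
  assumes "a \<in> Uplus I x" "p \<in> Ef I (snd a)" "p \<noteq> a" "1 \<le> x p"
    and choice: "chF I (snd a) (\<lambda>e. restr (Ef I (snd a)) x e + unitv a e)
      = (\<lambda>e. restr (Ef I (snd a)) x e + unitv a e - unitv p e)"
  shows "legal_fpair I x a c \<longleftrightarrow> c = p"
proof -
  have "1 \<le> restr (Ef I (snd a)) x p" using assms(2,4) by (simp add: restr_def)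
  from int_exchange_eq_iff[of "restr (Ef I (snd a)) x", OF this assms(3)] show ?thesis
    using assms(1-3) unfolding legal_fpair_def choice by auto
qed

lemma Uminus_iff: "e \<in> Uminus I x \<longleftrightarrow> e \<in> Ed I \<and> 0 < x e \<and> e \<notin> Uplus I x"
  by (auto simp: Uminus_def Uplus_def)

lemma essential_wpair_if_unique_gain:
  assumes "legal_wpair I x c a" "\<forall>d\<in>Uplus I x. fst d = fst c \<longrightarrow> d = a"
  shows "essential_wpair I x c a"
  using assms unfolding essential_wpair_def by blast

lemma chi_rot_class:
  assumes "rot_class R = rot_class R'"
  shows "chi R = chi R'"
proof -
  have "R \<in> rot_class R"
    unfolding rot_class_def by (metis (mono_tags) mem_Collect_eq rotate0 id_apply)
  then obtain n where "R = rotate n R'" using assms unfolding rot_class_def by auto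
  then have "set R = set R'" by simp
  then show ?thesis unfolding chi_def by (simp only:)
qed

lemma rot_class_pair: "rot_class [u, v] = {[u, v], [v, u]}"
proof -
  have "rotate n [u, v] = (if even n then [u, v] else [v, u])" for n
    by (induction n) (simp_all add: rotate1_rotate_swap[symmetric])
  then show ?thesis unfolding rot_class_def by (auto intro: exI[of _ 0] exI[of _ 1])
qed

lemma distinct_concat_pairs:
  "distinct (concat (map (\<lambda>(a, c). [a, c]) R)) \<Longrightarrow> distinct (map fst R) \<and> distinct (map snd R)"
proof (induction R)
  case (Cons r R)
  have "set (concat (map (\<lambda>(a, c). [a, c]) R)) = fst ` set R \<union> snd ` set R"
    by (induction R) auto
  with Cons show ?case by (cases r) auto
qed simp

lemma cyclic_pairs_two:
  assumes "A \<noteq> B" "R \<noteq> []" "distinct (map snd R)"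
    and pairs: "\<forall>r\<in>set R. r = (A, C) \<or> (snd r = D \<and> fst r \<noteq> A)"
    and after_D: "\<forall>i<length R. snd (R ! i) = D \<longrightarrow> fst (R ! (Suc i mod length R)) = A"
    and after_C: "\<forall>i<length R. snd (R ! i) = C \<longrightarrow> fst (R ! (Suc i mod length R)) = B"
  shows "R = [(A, C), (B, D)] \<or> R = [(B, D), (A, C)]"
proof -
  have "length R = card (set (map snd R))" using distinct_card[OF assms(3)] by simp
  also have "\<dots> \<le> card {C, D}" by (rule card_mono) (use pairs in auto)
  also have "\<dots> \<le> 2" by (simp add: card_insert_if)
  finally have "length R \<le> 2" .
  then consider r where "R = [r]" | r0 r1 where "R = [r0, r1]"
    using assms(2) by (cases R; cases "tl R") (auto simp: Suc_le_eq)
  then show ?thesis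
  proof cases
    case 1
    then show ?thesis
      using pairs after_D[rule_format, of 0] after_C[rule_format, of 0] assms(1) by auto
  next
    case 2
    then show ?thesis
      using pairs assms(3) after_D[rule_format, of 0] after_C[rule_format, of 0]
        after_D[rule_format, of 1] after_C[rule_format, of 1]
      by (cases r0; cases r1) auto
  qed
qed

section \<open>The instance\<close>

abbreviation "eA \<equiv> (2::nat, 2::nat)"
abbreviation "eD \<equiv> (2::nat, 3::nat)"
abbreviation "eC2 \<equiv> (3::nat, 2::nat)"
abbreviation "eB2 \<equiv> (3::nat, 3::nat)"
abbreviation "eC3 \<equiv> (4::nat, 2::nat)"
abbreviation "eB3 \<equiv> (4::nat, 3::nat)"

definition gap_edges :: "(nat \<times> nat) set" where
  "gap_edges = {eA, eD, eC2, eB2, eC3, eB3}"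

definition gap_cap :: "nat \<Rightarrow> nat \<times> nat \<Rightarrow> nat" where
  "gap_cap k e = (if e = eA \<or> e = eD then 2*k else if e \<in> gap_edges then k else 0)"

definition gap_chW :: "nat \<Rightarrow> nat \<Rightarrow> (nat \<times> nat \<Rightarrow> nat) \<Rightarrow> nat \<times> nat \<Rightarrow> nat" where
  "gap_chW k w = (if w = 2 then priority [eD, eA] (2*k)
     else if w = 3 then priority [eC2, eB2] k else priority [eC3, eB3] k)"

definition gap_chF :: "nat \<Rightarrow> nat \<Rightarrow> (nat \<times> nat \<Rightarrow> nat) \<Rightarrow> nat \<times> nat \<Rightarrow> nat" where
  "gap_chF k f = (if f = 2 then take_first eA (even_split eC2 eC3) (2*k)
     else priority [eB2, eB3, eD] (2*k))"

definition gap_inst :: "nat \<Rightarrow> (nat, nat) ginst" where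
  "gap_inst k = \<lparr>Wv = {2, 3, 4}, Fv = {2, 3}, Ed = gap_edges, cap = gap_cap k,
     chW = gap_chW k, chF = gap_chF k\<rparr>"

lemma gap_inst_simps [simp]:
  "Wv (gap_inst k) = {2, 3, 4}" "Fv (gap_inst k) = {2, 3}" "Ed (gap_inst k) = gap_edges"
  "cap (gap_inst k) = gap_cap k" "chW (gap_inst k) = gap_chW k" "chF (gap_inst k) = gap_chF k"
  by (simp_all add: gap_inst_def)

lemma gap_edge_sets:
  "Ew (gap_inst k) 2 = {eD, eA}" "Ew (gap_inst k) 3 = {eC2, eB2}" "Ew (gap_inst k) 4 = {eC3, eB3}"
  "Ef (gap_inst k) 2 = {eA, eC2, eC3}" "Ef (gap_inst k) 3 = {eB2, eB3, eD}"
  by (auto simp: Ew_def Ef_def gap_edges_def)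

lemma gap_cap_simps [simp]:
  "gap_cap k eA = 2*k" "gap_cap k eD = 2*k" "gap_cap k eC2 = k" "gap_cap k eB2 = k"
  "gap_cap k eC3 = k" "gap_cap k eB3 = k"
  by (simp_all add: gap_cap_def gap_edges_def)

lemma gap_choice_simps [simp]:
  "gap_chW k 2 = priority [eD, eA] (2*k)" "gap_chW k 3 = priority [eC2, eB2] k"
  "gap_chW k 4 = priority [eC3, eB3] k"
  "gap_chF k 2 = take_first eA (even_split eC2 eC3) (2*k)"
  "gap_chF k 3 = priority [eB2, eB3, eD] (2*k)"
  by (simp_all add: gap_chW_def gap_chF_def)

lemma gap_quota_families:
  "quota_family {eD, eA} (priority [eD, eA])" "quota_family {eC2, eB2} (priority [eC2, eB2])"
  "quota_family {eC3, eB3} (priority [eC3, eB3])"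
  "quota_family {eA, eC2, eC3} (take_first eA (even_split eC2 eC3))"
  "quota_family {eB2, eB3, eD} (priority [eB2, eB3, eD])"
  using quota_family_priority[of "[eD, eA]"] quota_family_priority[of "[eC2, eB2]"]
    quota_family_priority[of "[eC3, eB3]"] quota_family_priority[of "[eB2, eB3, eD]"]
    quota_family_take_first[OF quota_family_even_split, of eC2 eC3 eA]
  by simp_all

lemma valid_gap_inst: "valid_instance (gap_inst k)"
  unfolding valid_instance_def using gap_quota_families
  by (auto simp: gap_edges_def gap_edge_sets intro!: choice_axioms_quota_family)

lemma bmax_gap_inst: "1 \<le> k \<Longrightarrow> bmax (gap_inst k) = 2*k"
proof -
  assume "1 \<le> k"
  have "gap_cap k ` gap_edges = {2*k, k}" unfolding gap_edges_def by auto
  with \<open>1 \<le> k\<close> show ?thesis by (simp add: bmax_def)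
qed

definition within_quotas :: "nat \<Rightarrow> (nat \<times> nat \<Rightarrow> nat) \<Rightarrow> bool" where
  "within_quotas k x \<longleftrightarrow> x eD + x eA \<le> 2*k \<and> x eC2 + x eB2 \<le> k \<and> x eC3 + x eB3 \<le> k \<and>
     x eA + x eC2 + x eC3 \<le> 2*k \<and> x eB2 + x eB3 + x eD \<le> 2*k"

lemma gmatching_gap_inst_iff:
  "gmatching (gap_inst k) x \<longleftrightarrow> (\<forall>e. e \<notin> gap_edges \<longrightarrow> x e = 0) \<and> within_quotas k x"
proof -
  have acceptable_iff: "(\<forall>w\<in>{2, 3, 4}. acceptable (Ew (gap_inst k) w) (gap_cap k) (gap_chW k w)
        (restr (Ew (gap_inst k) w) x)) \<and>
      (\<forall>f\<in>{2, 3}. acceptable (Ef (gap_inst k) f) (gap_cap k) (gap_chF k f)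
        (restr (Ef (gap_inst k) f) x)) \<longleftrightarrow> within_quotas k x"
    if "\<forall>e\<in>gap_edges. x e \<le> gap_cap k e"
    using that acceptable_restr_iff[OF gap_quota_families(1)]
      acceptable_restr_iff[OF gap_quota_families(2)] acceptable_restr_iff[OF gap_quota_families(3)]
      acceptable_restr_iff[OF gap_quota_families(4)] acceptable_restr_iff[OF gap_quota_families(5)]
    by (simp add: gap_edge_sets within_quotas_def gap_edges_def add.commute add.left_commute)
  have "within_quotas k x \<Longrightarrow> \<forall>e\<in>gap_edges. x e \<le> gap_cap k e"
    by (auto simp: within_quotas_def gap_edges_def)
  then show ?thesis
    using acceptable_iff unfolding gmatching_def by auto
qed

lemma within_quotas_vbox:
  assumes "within_quotas k x"
  shows "restr {eD, eA} x \<in> vbox {eD, eA} (gap_cap k)"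
    "restr {eC2, eB2} x \<in> vbox {eC2, eB2} (gap_cap k)"
    "restr {eC3, eB3} x \<in> vbox {eC3, eB3} (gap_cap k)"
    "restr {eA, eC2, eC3} x \<in> vbox {eA, eC2, eC3} (gap_cap k)"
    "restr {eB2, eB3, eD} x \<in> vbox {eB2, eB3, eD} (gap_cap k)"
  using assms by (auto simp: within_quotas_def intro!: restr_in_vbox)

lemma interesting_w_gap_inst_iff:
  assumes "within_quotas k x"
  shows "interesting_w (gap_inst k) x eD \<longleftrightarrow> x eD < 2*k"
    "interesting_w (gap_inst k) x eA \<longleftrightarrow> x eD + x eA < 2*k"
    "interesting_w (gap_inst k) x eC2 \<longleftrightarrow> x eC2 < k"
    "interesting_w (gap_inst k) x eB2 \<longleftrightarrow> x eC2 + x eB2 < k"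
    "interesting_w (gap_inst k) x eC3 \<longleftrightarrow> x eC3 < k"
    "interesting_w (gap_inst k) x eB3 \<longleftrightarrow> x eC3 + x eB3 < k"
proof -
  note vb = within_quotas_vbox[OF assms] and q = assms[unfolded within_quotas_def]
  note first = interesting_priority_iff[of "[]" _ "[_]", simplified]
  note second = interesting_priority_iff[of "[_]" _ "[]", simplified]
  show "interesting_w (gap_inst k) x eD \<longleftrightarrow> x eD < 2*k"
    using first[OF _ vb(1)] by (simp add: interesting_w_def gap_edge_sets restr_def)
  show "interesting_w (gap_inst k) x eA \<longleftrightarrow> x eD + x eA < 2*k"
    using second[OF _ vb(1)] q by (simp add: interesting_w_def gap_edge_sets restr_def; linarith)
  show "interesting_w (gap_inst k) x eC2 \<longleftrightarrow> x eC2 < k"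
    using first[OF _ vb(2)] by (simp add: interesting_w_def gap_edge_sets restr_def)
  show "interesting_w (gap_inst k) x eB2 \<longleftrightarrow> x eC2 + x eB2 < k"
    using second[OF _ vb(2)] q by (simp add: interesting_w_def gap_edge_sets restr_def; linarith)
  show "interesting_w (gap_inst k) x eC3 \<longleftrightarrow> x eC3 < k"
    using first[OF _ vb(3)] by (simp add: interesting_w_def gap_edge_sets restr_def)
  show "interesting_w (gap_inst k) x eB3 \<longleftrightarrow> x eC3 + x eB3 < k"
    using second[OF _ vb(3)] q by (simp add: interesting_w_def gap_edge_sets restr_def; linarith)
qed

lemma interesting_f_gap_inst_firm2_iff:
  assumes "within_quotas k x"
  shows "interesting_f (gap_inst k) x eA \<longleftrightarrow> x eA < 2*k"
    "interesting_f (gap_inst k) x eC2 \<longleftrightarrow>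
      x eC2 < k \<and> (x eC2 + x eC3 < 2*k - x eA \<or> x eC2 < (2*k - x eA) div 2)"
    "interesting_f (gap_inst k) x eC3 \<longleftrightarrow>
      x eC3 < k \<and> (x eC2 + x eC3 < 2*k - x eA \<or> (2*k - x eA) div 2 < x eC2)"
proof -
  note vb = within_quotas_vbox[OF assms] and q = assms[unfolded within_quotas_def]
  define h where "h = (2*k - x eA) div 2"
  have hg: "h + (2*k - x eA - h) = 2*k - x eA" "x eC2 + x eC3 \<le> h + (2*k - x eA - h)"
    using q by (auto simp: h_def)
  have split_at: "take_first eA (even_split eC2 eC3) (2*k) ((restr {eA, eC2, eC3} x)(e := t)) e =
      (if e = eC2 then share_fst h (2*k - x eA - h) t (x eC3)
       else share_snd h (2*k - x eA - h) (x eC2) t)" if "e = eC2 \<or> e = eC3" for e t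
    using that q by (auto simp: take_first_def even_split_def restr_def h_def min_def)
  show "interesting_f (gap_inst k) x eA \<longleftrightarrow> x eA < 2*k"
    using interesting_take_first_head_iff[OF vb(4)]
    by (simp add: interesting_f_def gap_edge_sets restr_def)
  show "interesting_f (gap_inst k) x eC2 \<longleftrightarrow>
      x eC2 < k \<and> (x eC2 + x eC3 < 2*k - x eA \<or> x eC2 < (2*k - x eA) div 2)"
    using ex_share_fst_increase[OF hg(2), of k, unfolded hg(1), unfolded h_def]
    by (simp add: interesting_f_def gap_edge_sets interesting_iff_update[OF vb(4)] split_at)
      (simp add: restr_def h_def)
  show "interesting_f (gap_inst k) x eC3 \<longleftrightarrow>
      x eC3 < k \<and> (x eC2 + x eC3 < 2*k - x eA \<or> (2*k - x eA) div 2 < x eC2)"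
    using ex_share_snd_increase[OF hg(2), of k, unfolded hg(1), unfolded h_def]
    by (simp add: interesting_f_def gap_edge_sets interesting_iff_update[OF vb(4)] split_at)
      (simp add: restr_def h_def)
qed

lemma interesting_f_gap_inst_firm3_iff:
  assumes "within_quotas k x"
  shows "interesting_f (gap_inst k) x eB2 \<longleftrightarrow> x eB2 < k"
    "interesting_f (gap_inst k) x eB3 \<longleftrightarrow> x eB3 < k"
    "interesting_f (gap_inst k) x eD \<longleftrightarrow> x eB2 + x eB3 + x eD < 2*k"
proof -
  note vb = within_quotas_vbox[OF assms] and q = assms[unfolded within_quotas_def]
  show "interesting_f (gap_inst k) x eB2 \<longleftrightarrow> x eB2 < k"
    using interesting_priority_iff[of "[]" _ "[_, _]", simplified, OF _ vb(5)]
    by (simp add: interesting_f_def gap_edge_sets restr_def; linarith)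
  show "interesting_f (gap_inst k) x eB3 \<longleftrightarrow> x eB3 < k"
    using interesting_priority_iff[of "[_]" _ "[_]", simplified, OF _ vb(5)] q
    by (simp add: interesting_f_def gap_edge_sets restr_def; linarith)
  show "interesting_f (gap_inst k) x eD \<longleftrightarrow> x eB2 + x eB3 + x eD < 2*k"
    using interesting_priority_iff[of "[_, _]" _ "[]", simplified, OF _ vb(5)] q
    by (simp add: interesting_f_def gap_edge_sets restr_def; linarith)
qed

section \<open>Stable g-matchings of the instance\<close>

lemma stable_gap_inst_iff_arith:
  "stable (gap_inst k) x \<longleftrightarrow> (\<forall>e. e \<notin> gap_edges \<longrightarrow> x e = 0) \<and> within_quotas k x \<and>
    \<not> (x eD + x eA < 2*k \<and> x eA < 2*k) \<and> \<not> (x eD < 2*k \<and> x eB2 + x eB3 + x eD < 2*k) \<and>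
    \<not> (x eC2 < k \<and> (x eC2 + x eC3 < 2*k - x eA \<or> x eC2 < (2*k - x eA) div 2)) \<and>
    \<not> (x eC2 + x eB2 < k \<and> x eB2 < k) \<and>
    \<not> (x eC3 < k \<and> (x eC2 + x eC3 < 2*k - x eA \<or> (2*k - x eA) div 2 < x eC2)) \<and>
    \<not> (x eC3 + x eB3 < k \<and> x eB3 < k)"
proof -
  have unblocked: "stable (gap_inst k) x \<longleftrightarrow>
      (\<forall>e. e \<notin> gap_edges \<longrightarrow> x e = 0) \<and> within_quotas k x \<and>
      \<not> (interesting_w (gap_inst k) x eA \<and> interesting_f (gap_inst k) x eA) \<and>
      \<not> (interesting_w (gap_inst k) x eD \<and> interesting_f (gap_inst k) x eD) \<and>
      \<not> (interesting_w (gap_inst k) x eC2 \<and> interesting_f (gap_inst k) x eC2) \<and>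
      \<not> (interesting_w (gap_inst k) x eB2 \<and> interesting_f (gap_inst k) x eB2) \<and>
      \<not> (interesting_w (gap_inst k) x eC3 \<and> interesting_f (gap_inst k) x eC3) \<and>
      \<not> (interesting_w (gap_inst k) x eB3 \<and> interesting_f (gap_inst k) x eB3)"
    unfolding stable_def blocking_def gmatching_gap_inst_iff by (auto simp: gap_edges_def)
  show ?thesis
  proof (cases "within_quotas k x")
    case True
    show ?thesis unfolding unblocked
      by (simp add: interesting_w_gap_inst_iff[OF True] interesting_f_gap_inst_firm2_iff[OF True]
          interesting_f_gap_inst_firm3_iff[OF True] del: One_nat_def)
  qed (simp add: unblocked)
qed

lemma unblocked_quotas_determine:
  fixes a d c2 b2 c3 b3 k h :: nat
  assumes quotas: "d + a \<le> 2*k" "c2 + b2 \<le> k" "c3 + b3 \<le> k" "a + c2 + c3 \<le> 2*k"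
      "b2 + b3 + d \<le> 2*k"
    and unblocked: "\<not> (d + a < 2*k \<and> a < 2*k)" "\<not> (d < 2*k \<and> b2 + b3 + d < 2*k)"
      "\<not> (c2 < k \<and> (c2 + c3 < 2*k - a \<or> c2 < h))" "\<not> (c2 + b2 < k \<and> b2 < k)"
      "\<not> (c3 < k \<and> (c2 + c3 < 2*k - a \<or> h < c2))" "\<not> (c3 + b3 < k \<and> b3 < k)"
    and h: "2*h \<le> 2*k - a" "2*k - a \<le> 2*h + 1"
  shows "a \<le> 2*k \<and> d = 2*k - a \<and> c2 = h \<and> c3 = 2*k - a - h \<and> b2 = k - h \<and>
    b3 = k - (2*k - a - h)"
proof -
  have "a + d = 2*k" "c2 + b2 = k" "c3 + b3 = k" "b2 + b3 + d = 2*k"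
    using quotas unblocked(1,2,4,6) by auto
  moreover from this have "c2 + c3 = 2*k - a" by linarith
  moreover from this have "c2 = h" using unblocked(3,5) h by auto
  ultimately show ?thesis by auto
qed

definition lower_half :: "nat \<Rightarrow> nat \<Rightarrow> nat" where
  "lower_half k j = (2*k - j) div 2"

lemma lower_half_bounds: "2 * lower_half k j \<le> 2*k - j" "2*k - j \<le> 2 * lower_half k j + 1"
  unfolding lower_half_def by presburger+

lemma lower_half_even: "t \<le> k \<Longrightarrow> lower_half k (2*t) = k - t"
  unfolding lower_half_def by presburger

lemma lower_half_odd: "t < k \<Longrightarrow> lower_half k (Suc (2*t)) = k - Suc t"
  unfolding lower_half_def by presburger

lemma lower_half_antimono:
  assumes "i \<le> j" "j \<le> 2*k"
  shows "lower_half k j \<le> lower_half k i" "2*k - j - lower_half k j \<le> 2*k - i - lower_half k i"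
    "lower_half k i \<le> k" "2*k - i - lower_half k i \<le> k"
  using assms unfolding lower_half_def by (simp_all add: div_le_mono)

lemma lower_half_add2:
  assumes "j + 2 \<le> 2*k"
  shows "Suc (lower_half k (j + 2)) = lower_half k j"
    "Suc (2*k - (j + 2) - lower_half k (j + 2)) = 2*k - j - lower_half k j"
proof -
  define r where "r = 2*k - (j + 2)"
  then have "2*k - j = r + 2" using assms by simp
  with r_def show "Suc (lower_half k (j + 2)) = lower_half k j"
    "Suc (2*k - (j + 2) - lower_half k (j + 2)) = 2*k - j - lower_half k j"
    by (simp_all add: lower_half_def Suc_diff_le)
qed

text \<open>The stable g-matching \<open>x\<^sub>j\<close>: worker 2 sends \<open>j\<close> units to firm 2, which splits its
  remaining quota \<open>2k - j\<close> evenly between workers 3 and 4 (worker 3 getting the lower half);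
  all remaining capacity goes to firm 3.\<close>
definition chain_matching :: "nat \<Rightarrow> nat \<Rightarrow> nat \<times> nat \<Rightarrow> nat" where
  "chain_matching k j = (\<lambda>e.
     if e = eA then j else if e = eD then 2*k - j
     else if e = eC2 then lower_half k j else if e = eB2 then k - lower_half k j
     else if e = eC3 then 2*k - j - lower_half k j
     else if e = eB3 then k - (2*k - j - lower_half k j) else 0)"

lemma chain_matching_simps [simp]:
  "chain_matching k j eA = j" "chain_matching k j eD = 2*k - j"
  "chain_matching k j eC2 = lower_half k j" "chain_matching k j eB2 = k - lower_half k j"
  "chain_matching k j eC3 = 2*k - j - lower_half k j"
  "chain_matching k j eB3 = k - (2*k - j - lower_half k j)"
  by (simp_all add: chain_matching_def)

lemma chain_matching_outside: "e \<notin> gap_edges \<Longrightarrow> chain_matching k j e = 0"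
  by (auto simp: chain_matching_def gap_edges_def)

lemma chain_matching_inj: "chain_matching k i = chain_matching k j \<Longrightarrow> i = j"
  by (metis chain_matching_simps(1))

lemma chain_matching_eB_sum: "j \<le> 2*k \<Longrightarrow> (k - lower_half k j) + (k - (2*k - j - lower_half k j)) = j"
  using lower_half_bounds[of k j] lower_half_antimono[of j j k] by linarith

lemma stable_chain_matching: "j \<le> 2*k \<Longrightarrow> stable (gap_inst k) (chain_matching k j)"
  using lower_half_bounds[of k j] unfolding stable_gap_inst_iff_arith
  by (auto simp: within_quotas_def chain_matching_outside simp flip: lower_half_def)

lemma stable_imp_chain_matching:
  assumes "stable (gap_inst k) x"
  shows "x eA \<le> 2*k \<and> x = chain_matching k (x eA)"
proof -
  note conds = assms[unfolded stable_gap_inst_iff_arith]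
  have vals: "x eA \<le> 2*k \<and> x eD = 2*k - x eA \<and> x eC2 = lower_half k (x eA) \<and>
      x eC3 = 2*k - x eA - lower_half k (x eA) \<and> x eB2 = k - lower_half k (x eA) \<and>
      x eB3 = k - (2*k - x eA - lower_half k (x eA))"
    using conds lower_half_bounds[of k "x eA"] unfolding within_quotas_def lower_half_def
    by (intro unblocked_quotas_determine) blast+
  have "x e = chain_matching k (x eA) e" for e
  proof (cases "e \<in> gap_edges")
    case True
    then show ?thesis using vals by (auto simp: gap_edges_def)
  next
    case False
    have "\<forall>e. e \<notin> gap_edges \<longrightarrow> x e = 0" using conds by blast
    then show ?thesis using False chain_matching_outside by metis
  qed
  then show ?thesis using vals by blast
qed

lemma stable_gap_inst_iff: "stable (gap_inst k) x \<longleftrightarrow> (\<exists>j \<le> 2*k. x = chain_matching k j)"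
  using stable_imp_chain_matching stable_chain_matching by blast

lemma firm2_choice_eq_chain_matching:
  assumes "j \<le> 2*k" "z eA = j" "lower_half k j \<le> z eC2" "2*k - j - lower_half k j \<le> z eC3"
  shows "take_first eA (even_split eC2 eC3) (2*k) z = restr {eA, eC2, eC3} (chain_matching k j)"
  using assms share_of_ge[OF assms(3,4)]
  by (auto simp: fun_eq_iff take_first_def even_split_def restr_def simp flip: lower_half_def)

lemma firm3_choice_eq:
  assumes "z eB2 + z eB3 \<le> 2*k" "\<forall>e. e \<notin> {eB2, eB3, eD} \<longrightarrow> z e = 0"
  shows "priority [eB2, eB3, eD] (2*k) z = z(eD := min (z eD) (2*k - z eB2 - z eB3))"
  using assms by (auto simp: fun_eq_iff priority_def take_first_def)

lemma firm2_choice_sup: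
  assumes "i \<le> j" "j \<le> 2*k"
  shows "take_first eA (even_split eC2 eC3) (2*k)
      (sup (restr {eA, eC2, eC3} (chain_matching k j)) (restr {eA, eC2, eC3} (chain_matching k i)))
    = restr {eA, eC2, eC3} (chain_matching k j)"
  using assms lower_half_antimono[OF assms]
  by (intro firm2_choice_eq_chain_matching) (auto simp: restr_def sup_nat_def)

lemma firm3_choice_sup:
  assumes "i \<le> j" "j \<le> 2*k"
  shows "priority [eB2, eB3, eD] (2*k)
      (sup (restr {eB2, eB3, eD} (chain_matching k j)) (restr {eB2, eB3, eD} (chain_matching k i)))
    = restr {eB2, eB3, eD} (chain_matching k j)"
  using assms lower_half_antimono[OF assms] chain_matching_eB_sum[OF assms(2)]
  by (subst firm3_choice_eq) (auto simp: fun_eq_iff restr_def sup_nat_def)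

lemma chain_matching_acceptable_at_firms:
  assumes "j \<le> 2*k"
  shows "acceptable {eA, eC2, eC3} (gap_cap k) (take_first eA (even_split eC2 eC3) (2*k))
      (restr {eA, eC2, eC3} (chain_matching k j))"
    "acceptable {eB2, eB3, eD} (gap_cap k) (priority [eB2, eB3, eD] (2*k))
      (restr {eB2, eB3, eD} (chain_matching k j))"
  using stable_chain_matching[OF assms] by (auto simp: stable_def gmatching_def gap_edge_sets)

lemma chain_matching_precF:
  assumes "i \<le> j" "j \<le> 2*k"
  shows "precF_eq (gap_inst k) (chain_matching k i) (chain_matching k j)"
proof (cases "i = j")
  case False
  have "restr {eA, eC2, eC3} (chain_matching k j) eA \<noteq> restr {eA, eC2, eC3} (chain_matching k i) eA"
    "restr {eB2, eB3, eD} (chain_matching k j) eD \<noteq> restr {eB2, eB3, eD} (chain_matching k i) eD"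
    using False assms by (simp_all add: restr_def)
  then have "vprec {eA, eC2, eC3} (gap_cap k) (take_first eA (even_split eC2 eC3) (2*k))
        (restr {eA, eC2, eC3} (chain_matching k i)) (restr {eA, eC2, eC3} (chain_matching k j))"
      "vprec {eB2, eB3, eD} (gap_cap k) (priority [eB2, eB3, eD] (2*k))
        (restr {eB2, eB3, eD} (chain_matching k i)) (restr {eB2, eB3, eD} (chain_matching k j))"
    unfolding vprec_def
    using assms chain_matching_acceptable_at_firms firm2_choice_sup firm3_choice_sup by auto
  then show ?thesis unfolding precF_eq_def vpreceq_def by (auto simp: gap_edge_sets)
qed (simp add: precF_eq_def)

lemma chain_matching_not_precF:
  assumes "i < j" "j \<le> 2*k"
  shows "\<not> precF_eq (gap_inst k) (chain_matching k j) (chain_matching k i)"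
proof
  let ?F2 = "{eA, eC2, eC3}" and ?C = "take_first eA (even_split eC2 eC3) (2*k)"
  assume "precF_eq (gap_inst k) (chain_matching k j) (chain_matching k i)"
  moreover have differ: "restr ?F2 (chain_matching k i) \<noteq> restr ?F2 (chain_matching k j)"
    using assms by (metis insertI1 less_irrefl restr_def chain_matching_simps(1))
  ultimately have "?C (sup (restr ?F2 (chain_matching k i)) (restr ?F2 (chain_matching k j)))
      = restr ?F2 (chain_matching k i)"
    unfolding precF_eq_def vpreceq_def vprec_def by (auto simp: gap_edge_sets)
  then show False
    using firm2_choice_sup[of i j k] assms differ by (simp add: sup_commute)
qed

lemma is_xmin_gap_inst_iff: "is_xmin (gap_inst k) x \<longleftrightarrow> x = chain_matching k 0"
proof
  assume min: "is_xmin (gap_inst k) x"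
  then obtain j where j: "j \<le> 2*k" "x = chain_matching k j"
    using stable_gap_inst_iff by (auto simp: is_xmin_def)
  moreover have "precF_eq (gap_inst k) x (chain_matching k 0)"
    using min stable_chain_matching[of 0 k] by (simp add: is_xmin_def)
  ultimately show "x = chain_matching k 0"
    using chain_matching_not_precF[of 0 j k] by (cases "j = 0") auto
qed (auto simp: is_xmin_def stable_gap_inst_iff intro: stable_chain_matching chain_matching_precF)

lemma is_xmax_gap_inst_iff: "is_xmax (gap_inst k) x \<longleftrightarrow> x = chain_matching k (2*k)"
proof
  assume max: "is_xmax (gap_inst k) x"
  then obtain j where j: "j \<le> 2*k" "x = chain_matching k j"
    using stable_gap_inst_iff by (auto simp: is_xmax_def)
  moreover have "precF_eq (gap_inst k) (chain_matching k (2*k)) x"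
    using max stable_chain_matching[of "2*k" k] by (simp add: is_xmax_def)
  ultimately show "x = chain_matching k (2*k)"
    using chain_matching_not_precF[of j "2*k" k] by (cases "j = 2*k") auto
qed (auto simp: is_xmax_def stable_gap_inst_iff intro: stable_chain_matching chain_matching_precF)

section \<open>Rotations of the instance\<close>

text \<open>From \<open>x\<^sub>j\<close> to \<open>x\<^sub>j\<^sub>+\<^sub>1\<close>: firm 2 accepts one more unit of \<open>eA\<close> and rejects one unit
  from the worker with the larger share (worker 3 if \<open>j\<close> is even, worker 4 if odd), who moves
  it to firm 3, which in turn rejects a unit of \<open>eD\<close>.\<close>
definition cut_edge :: "nat \<Rightarrow> nat \<times> nat" where
  "cut_edge j = (if even j then eC2 else eC3)"

definition gain_edge :: "nat \<Rightarrow> nat \<times> nat" where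
  "gain_edge j = (if even j then eB2 else eB3)"

definition rotation_at :: "nat \<Rightarrow> ((nat \<times> nat) \<times> (nat \<times> nat)) list" where
  "rotation_at j = [(eA, cut_edge j), (gain_edge j, eD)]"

lemma chi_rotation_at:
  "chi (rotation_at j) e =
    (if e = eA \<or> e = gain_edge j then 1 else if e = cut_edge j \<or> e = eD then -1 else 0)"
  by (auto simp: chi_def rotation_at_def cut_edge_def gain_edge_def)

lemma cut_edge_pos: "j < 2*k \<Longrightarrow> 1 \<le> chain_matching k j (cut_edge j)"
  by (cases "even j")
    (auto simp: cut_edge_def lower_half_even lower_half_odd elim!: evenE oddE)

lemma shifted_rotation_at:
  assumes "j < 2*k"
  shows "shifted (chain_matching k j) (rotation_at j) 1 = chain_matching k (Suc j)"
proof (cases "even j")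
  case True
  then obtain t where "j = 2*t" by (rule evenE)
  with assms have "j = 2*t" "t < k" "lower_half k j = k - t" "lower_half k (Suc j) = k - Suc t"
    by (simp_all add: lower_half_even lower_half_odd)
  then show ?thesis using True
    by (auto simp: fun_eq_iff shifted_def chi_rotation_at chain_matching_def cut_edge_def
        gain_edge_def)
next
  case False
  then obtain t where "j = Suc (2*t)" by (rule oddE) simp
  with assms have "j = Suc (2*t)" "t < k" "lower_half k j = k - Suc t"
      "lower_half k (Suc j) = k - Suc t"
    using lower_half_even[of "Suc t" k] by (simp_all add: lower_half_odd)
  then show ?thesis using False
    by (auto simp: fun_eq_iff shifted_def chi_rotation_at chain_matching_def cut_edge_def
        gain_edge_def)
qed

lemma firm2_chain_matching_Suc:
  assumes "j < 2*k"
  shows "restr {eA, eC2, eC3} (chain_matching k (Suc j))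
    = (\<lambda>e. restr {eA, eC2, eC3} (chain_matching k j) e + unitv eA e - unitv (cut_edge j) e)"
proof
  fix e
  have "chain_matching k (Suc j) e = nat (int (chain_matching k j e) + chi (rotation_at j) e)"
    using fun_cong[OF shifted_rotation_at[OF assms], of e] by (simp add: shifted_def)
  then show "restr {eA, eC2, eC3} (chain_matching k (Suc j)) e
      = restr {eA, eC2, eC3} (chain_matching k j) e + unitv eA e - unitv (cut_edge j) e"
    using cut_edge_pos[OF assms]
    by (cases "even j") (auto simp: restr_def unitv_def chi_rotation_at cut_edge_def gain_edge_def)
qed

lemma within_quotas_chain_matching: "j \<le> 2*k \<Longrightarrow> within_quotas k (chain_matching k j)"
  using stable_chain_matching by (simp add: stable_def gmatching_gap_inst_iff)

lemma Uplus_chain_matching: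
  assumes "j \<le> 2*k"
  shows "Uplus (gap_inst k) (chain_matching k j) = {e. (e = eA \<and> j < 2*k) \<or>
    (e = eB2 \<and> 0 < lower_half k j) \<or> (e = eB3 \<and> 0 < 2*k - j - lower_half k j)}"
  using interesting_f_gap_inst_firm2_iff[OF within_quotas_chain_matching[OF assms]]
    interesting_f_gap_inst_firm3_iff[OF within_quotas_chain_matching[OF assms]]
    lower_half_bounds[of k j] lower_half_antimono[of j j k] assms
  unfolding Uplus_def by (auto simp: gap_edges_def simp flip: lower_half_def)

lemma Uplus_chain_matching_subset:
  "j \<le> 2*k \<Longrightarrow> Uplus (gap_inst k) (chain_matching k j) \<subseteq> {eA, eB2, eB3}"
  using Uplus_chain_matching by auto

lemma rotation_at_edges:
  assumes "j < 2*k"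
  shows "eA \<in> Uplus (gap_inst k) (chain_matching k j)"
    "gain_edge j \<in> Uplus (gap_inst k) (chain_matching k j)"
    "cut_edge j \<in> Uminus (gap_inst k) (chain_matching k j)"
    "eD \<in> Uminus (gap_inst k) (chain_matching k j)"
proof -
  have pos: "1 \<le> chain_matching k j (cut_edge j)" by (rule cut_edge_pos[OF assms])
  note Up = Uplus_chain_matching[of j k]
  show "eA \<in> Uplus (gap_inst k) (chain_matching k j)" using Up assms by simp
  show "gain_edge j \<in> Uplus (gap_inst k) (chain_matching k j)"
    using Up assms pos by (auto simp: gain_edge_def cut_edge_def)
  show "cut_edge j \<in> Uminus (gap_inst k) (chain_matching k j)"
    using Up assms pos unfolding Uminus_iff by (auto simp: cut_edge_def gap_edges_def)
  show "eD \<in> Uminus (gap_inst k) (chain_matching k j)"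
    using Up assms unfolding Uminus_iff by (auto simp: gap_edges_def)
qed

lemma legal_fpair_eA_iff:
  assumes "j < 2*k"
  shows "legal_fpair (gap_inst k) (chain_matching k j) eA c \<longleftrightarrow> c = cut_edge j"
proof (rule legal_fpair_iff_rejected)
  have "take_first eA (even_split eC2 eC3) (2*k)
      (\<lambda>e. restr {eA, eC2, eC3} (chain_matching k j) e + unitv eA e)
    = restr {eA, eC2, eC3} (chain_matching k (Suc j))"
    using assms lower_half_antimono[of j "Suc j" k]
    by (intro firm2_choice_eq_chain_matching) (auto simp: restr_def unitv_def)
  then show "chF (gap_inst k) (snd eA)
      (\<lambda>e. restr (Ef (gap_inst k) (snd eA)) (chain_matching k j) e + unitv eA e)
    = (\<lambda>e. restr (Ef (gap_inst k) (snd eA)) (chain_matching k j) e + unitv eA e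
        - unitv (cut_edge j) e)"
    using firm2_chain_matching_Suc[OF assms] by (simp add: gap_edge_sets)
qed (use rotation_at_edges[OF assms] cut_edge_pos[OF assms]
  in \<open>auto simp: gap_edge_sets cut_edge_def\<close>)

lemma legal_fpair_eB_iff:
  assumes "j < 2*k" "b = eB2 \<or> b = eB3" "b \<in> Uplus (gap_inst k) (chain_matching k j)"
  shows "legal_fpair (gap_inst k) (chain_matching k j) b c \<longleftrightarrow> c = eD"
proof (rule legal_fpair_iff_rejected)
  let ?z = "\<lambda>e. restr {eB2, eB3, eD} (chain_matching k j) e + unitv b e"
  have sum: "?z eB2 + ?z eB3 = Suc j"
    using assms(2) chain_matching_eB_sum[of j k] assms(1) by (auto simp: restr_def unitv_def)
  have at_eD: "?z eD = 2*k - j"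
    using assms(2) by (auto simp: restr_def unitv_def)
  have "priority [eB2, eB3, eD] (2*k) ?z = ?z(eD := min (?z eD) (2*k - ?z eB2 - ?z eB3))"
    using assms(1,2) sum by (intro firm3_choice_eq) (auto simp: restr_def unitv_def)
  also have "min (?z eD) (2*k - ?z eB2 - ?z eB3) = ?z eD - 1"
    using sum at_eD by (simp only: diff_diff_left)
  also have "?z(eD := ?z eD - 1) = (\<lambda>e. ?z e - unitv eD e)"
    by (auto simp: fun_eq_iff unitv_def)
  finally show "chF (gap_inst k) (snd b)
      (\<lambda>e. restr (Ef (gap_inst k) (snd b)) (chain_matching k j) e + unitv b e)
    = (\<lambda>e. restr (Ef (gap_inst k) (snd b)) (chain_matching k j) e + unitv b e - unitv eD e)"
    using assms(2) by (auto simp: gap_edge_sets)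
qed (use assms in \<open>auto simp: gap_edge_sets\<close>)

lemma legal_fpair_chain_matching:
  assumes "j < 2*k" "legal_fpair (gap_inst k) (chain_matching k j) a c"
  shows "(a = eA \<and> c = cut_edge j) \<or> ((a = eB2 \<or> a = eB3) \<and> c = eD)"
proof -
  have a: "a \<in> Uplus (gap_inst k) (chain_matching k j)"
    using assms(2) by (simp add: legal_fpair_def)
  then have "a = eA \<or> a = eB2 \<or> a = eB3"
    using Uplus_chain_matching_subset[of j k] assms(1) by auto
  moreover have "a = eA \<Longrightarrow> c = cut_edge j"
    using legal_fpair_eA_iff[OF assms(1), of c] assms(2) by blast
  moreover have "a = eB2 \<or> a = eB3 \<Longrightarrow> c = eD"
    using legal_fpair_eB_iff[OF assms(1) _ a, of c] assms(2) by blast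
  ultimately show ?thesis by blast
qed

lemma essential_wpair_chain_matching:
  assumes "j \<le> 2*k" "essential_wpair (gap_inst k) (chain_matching k j) c a"
  shows "(c = eD \<and> a = eA) \<or> (c = eC2 \<and> a = eB2) \<or> (c = eC3 \<and> a = eB3)"
proof -
  have "c \<in> Uminus (gap_inst k) (chain_matching k j)" "a \<in> Uplus (gap_inst k) (chain_matching k j)"
    "fst a = fst c"
    using assms(2) by (auto simp: essential_wpair_def legal_wpair_def)
  then show ?thesis
    using Uplus_chain_matching_subset[OF assms(1)] unfolding Uminus_iff
    by (auto simp: gap_edges_def)
qed

lemma essential_wpair_chain_matching_intro:
  assumes "j \<le> 2*k" "c \<in> Uminus (gap_inst k) (chain_matching k j)"
    "a \<in> Uplus (gap_inst k) (chain_matching k j)" "fst a = fst c"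
    "acceptable (Ew (gap_inst k) (fst c)) (gap_cap k) (gap_chW k (fst c))
       (\<lambda>e. restr (Ew (gap_inst k) (fst c)) (chain_matching k j) e + unitv a e - unitv c e)"
  shows "essential_wpair (gap_inst k) (chain_matching k j) c a"
proof (rule essential_wpair_if_unique_gain)
  show "legal_wpair (gap_inst k) (chain_matching k j) c a"
    using assms(2-5) by (simp add: legal_wpair_def)
  show "\<forall>d\<in>Uplus (gap_inst k) (chain_matching k j). fst d = fst c \<longrightarrow> d = a"
  proof (intro ballI impI)
    fix d assume "d \<in> Uplus (gap_inst k) (chain_matching k j)" "fst d = fst c"
    moreover have "a \<in> {eA, eB2, eB3}"
      using Uplus_chain_matching_subset[OF assms(1)] assms(3) by blast
    ultimately show "d = a"
      using Uplus_chain_matching_subset[OF assms(1)] assms(4) by (auto simp del: One_nat_def)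
  qed
qed

lemma worker2_accepts_exchange:
  assumes "j < 2*k"
  shows "acceptable (Ew (gap_inst k) (fst eD)) (gap_cap k) (gap_chW k (fst eD))
      (\<lambda>e. restr (Ew (gap_inst k) (fst eD)) (chain_matching k j) e + unitv eA e - unitv eD e)"
proof -
  let ?z = "\<lambda>e. restr {eD, eA} (chain_matching k j) e + unitv eA e - unitv eD e"
  have "?z \<in> vbox {eD, eA} (gap_cap k)" "vnorm {eD, eA} ?z \<le> 2*k"
    using assms by (auto simp: vbox_def vnorm_def restr_def unitv_def)
  then have "acceptable {eD, eA} (gap_cap k) (priority [eD, eA] (2*k)) ?z"
    using acceptable_quota_family_iff[OF gap_quota_families(1)] by blast
  then show ?thesis by (simp add: gap_edge_sets)
qed

lemma cut_worker_accepts_exchange: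
  assumes "j < 2*k"
  shows "acceptable (Ew (gap_inst k) (fst (cut_edge j))) (gap_cap k) (gap_chW k (fst (cut_edge j)))
      (\<lambda>e. restr (Ew (gap_inst k) (fst (cut_edge j))) (chain_matching k j) e
        + unitv (gain_edge j) e - unitv (cut_edge j) e)"
proof -
  let ?E = "{cut_edge j, gain_edge j}"
  let ?z = "\<lambda>e. restr ?E (chain_matching k j) e + unitv (gain_edge j) e - unitv (cut_edge j) e"
  have "lower_half k j \<le> k" "2*k - j - lower_half k j \<le> k"
    using lower_half_antimono[of j j k] assms by simp_all
  then have "?z \<in> vbox ?E (gap_cap k)" "vnorm ?E ?z \<le> k"
    using cut_edge_pos[OF assms]
    by (auto simp: vbox_def vnorm_def restr_def unitv_def cut_edge_def gain_edge_def)
  moreover have "quota_family ?E (priority [cut_edge j, gain_edge j])"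
    using gap_quota_families(2,3) by (simp add: cut_edge_def gain_edge_def)
  ultimately have "acceptable ?E (gap_cap k) (priority [cut_edge j, gain_edge j] k) ?z"
    using acceptable_quota_family_iff by blast
  then show ?thesis by (cases "even j") (simp_all add: gap_edge_sets cut_edge_def gain_edge_def)
qed

lemma rotation_at_is_rotation:
  assumes "j < 2*k"
  shows "is_rotation (gap_inst k) (chain_matching k j) (rotation_at j)"
proof -
  let ?I = "gap_inst k" and ?x = "chain_matching k j"
  note edges = rotation_at_edges[OF assms]
  have fpairs: "legal_fpair ?I ?x eA (cut_edge j)" "legal_fpair ?I ?x (gain_edge j) eD"
    using legal_fpair_eA_iff[OF assms] legal_fpair_eB_iff[OF assms _ edges(2)]
    by (auto simp: gain_edge_def)
  have wpairs: "essential_wpair ?I ?x (cut_edge j) (gain_edge j)" "essential_wpair ?I ?x eD eA"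
    using essential_wpair_chain_matching_intro[OF _ edges(3) edges(2)]
      essential_wpair_chain_matching_intro[OF _ edges(4) edges(1)]
      worker2_accepts_exchange[OF assms] cut_worker_accepts_exchange[OF assms] assms
    by (auto simp: cut_edge_def gain_edge_def)
  have "rarc ?I ?x (WV eA) (FV eA)" "rarc ?I ?x (FV eA) (FV (cut_edge j))"
    "rarc ?I ?x (FV (cut_edge j)) (WV (cut_edge j))"
    "rarc ?I ?x (WV (cut_edge j)) (WV (gain_edge j))"
    "rarc ?I ?x (WV (gain_edge j)) (FV (gain_edge j))" "rarc ?I ?x (FV (gain_edge j)) (FV eD)"
    "rarc ?I ?x (FV eD) (WV eD)" "rarc ?I ?x (WV eD) (WV eA)"
    using edges fpairs wpairs
    by (auto intro: rarc_WV_FV_I rarc_FV_WV_I rarc_FV_FV_I rarc_WV_WV_I)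
  moreover have "distinct [eA, cut_edge j, gain_edge j, eD]"
    by (simp add: cut_edge_def gain_edge_def)
  ultimately show ?thesis
    unfolding is_rotation_def rotation_at_def
    using stable_chain_matching[of j k] assms by (auto simp: less_Suc_eq)
qed

lemma is_rotation_chain_matching:
  assumes "j \<le> 2*k" "is_rotation (gap_inst k) (chain_matching k j) R"
  shows "j < 2*k \<and> rot_class R = rot_class (rotation_at j)"
proof -
  let ?I = "gap_inst k" and ?x = "chain_matching k j" and ?n = "length R"
  have ne: "R \<noteq> []" and dist: "distinct (concat (map (\<lambda>(a, c). [a, c]) R))"
    using assms(2) by (auto simp: is_rotation_def)
  have arcs: "fst (R ! i) \<in> Uplus ?I ?x" "legal_fpair ?I ?x (fst (R ! i)) (snd (R ! i))"
      "essential_wpair ?I ?x (snd (R ! i)) (fst (R ! (Suc i mod ?n)))" if "i < ?n" for i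
    using assms(2) that rarc_WV_FV rarc_FV_FV rarc_WV_WV unfolding is_rotation_def by blast+
  have "Uplus ?I (chain_matching k (2*k)) = {}"
    using Uplus_chain_matching[of "2*k" k] by (simp add: lower_half_def)
  then have j: "j < 2*k" using arcs(1)[of 0] ne assms(1) by (cases "j = 2*k") auto
  have "\<forall>r\<in>set R. r = (eA, cut_edge j) \<or> (snd r = eD \<and> fst r \<noteq> eA)"
  proof
    fix r assume "r \<in> set R"
    then obtain i where "i < ?n" "r = R ! i" by (auto simp: in_set_conv_nth)
    then have "fst r = eA \<and> snd r = cut_edge j \<or> (fst r = eB2 \<or> fst r = eB3) \<and> snd r = eD"
      using legal_fpair_chain_matching[OF j arcs(2)] by blast
    moreover have "eB2 \<noteq> eA" "eB3 \<noteq> eA" by simp_all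
    ultimately show "r = (eA, cut_edge j) \<or> (snd r = eD \<and> fst r \<noteq> eA)"
      by (metis prod.collapse)
  qed
  moreover have "snd (R ! i) = eD \<longrightarrow> fst (R ! (Suc i mod ?n)) = eA"
    "snd (R ! i) = cut_edge j \<longrightarrow> fst (R ! (Suc i mod ?n)) = gain_edge j" if "i < ?n" for i
    using essential_wpair_chain_matching[OF assms(1) arcs(3)[OF that]]
    by (auto simp: cut_edge_def gain_edge_def)
  ultimately have
    "R = [(eA, cut_edge j), (gain_edge j, eD)] \<or> R = [(gain_edge j, eD), (eA, cut_edge j)]"
    using cyclic_pairs_two[OF _ ne] distinct_concat_pairs[OF dist] by (simp add: gain_edge_def)
  then show ?thesis using j by (auto simp: rotation_at_def rot_class_pair)
qed

lemma tau_rotation_at: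
  assumes "j < 2*k"
  shows "tau (gap_inst k) (chain_matching k j) (rotation_at j) = 1"
  unfolding tau_def
proof (rule Greatest_equality)
  have "0 \<le> int (chain_matching k j e) + chi (rotation_at j) e" for e
    using cut_edge_pos[OF assms] assms by (auto simp: chi_rotation_at)
  then show "\<forall>i\<in>{1..1}. shift_ok (gap_inst k) (chain_matching k j) (rotation_at j) i"
    using shifted_rotation_at[OF assms] stable_chain_matching[of "Suc j" k] assms
    by (simp add: shift_ok_def shifted_def)
next
  fix l assume ok: "\<forall>i\<in>{1..l}. shift_ok (gap_inst k) (chain_matching k j) (rotation_at j) i"
  show "l \<le> 1"
  proof (rule ccontr)
    assume "\<not> l \<le> 1"
    then have "shift_ok (gap_inst k) (chain_matching k j) (rotation_at j) 2"
      using ok by simp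
    then have "stable (gap_inst k) (shifted (chain_matching k j) (rotation_at j) 2)"
      by (simp add: shift_ok_def shifted_def)
    then obtain m where m: "m \<le> 2*k"
        "shifted (chain_matching k j) (rotation_at j) 2 = chain_matching k m"
      using stable_gap_inst_iff by blast
    have "m = j + 2"
      using fun_cong[OF m(2), of eA] by (simp add: shifted_def chi_rotation_at)
    \<comment> \<open>the firm-2 edge not in the rotation keeps its value, but \<open>x\<^sub>j\<^sub>+\<^sub>2\<close> lowers both\<close>
    moreover have "chain_matching k j eC2 = Suc (chain_matching k (j + 2) eC2)"
      "chain_matching k j eC3 = Suc (chain_matching k (j + 2) eC3)"
      using lower_half_add2[of j k] m(1) \<open>m = j + 2\<close> by simp_all
    ultimately show False
      using fun_cong[OF m(2), of eC2] fun_cong[OF m(2), of eC3]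
      by (cases "even j") (simp_all add: shifted_def chi_rotation_at cut_edge_def gain_edge_def)
  qed
qed

lemma full_route_gap_inst_nth:
  assumes "full_route (gap_inst k) xs Rs" "i \<le> length Rs"
  shows "xs ! i = chain_matching k i \<and> i \<le> 2*k \<and>
    (\<forall>m<i. rot_class (Rs ! m) = rot_class (rotation_at m))"
  using assms(2)
proof (induction i)
  case 0
  then show ?case using assms(1) is_xmin_gap_inst_iff by (simp add: full_route_def)
next
  case (Suc i)
  then have IH: "xs ! i = chain_matching k i" "i \<le> 2*k"
      "\<forall>m<i. rot_class (Rs ! m) = rot_class (rotation_at m)" and i: "i < length Rs"
    by auto
  have step: "is_rotation (gap_inst k) (chain_matching k i) (Rs ! i)"
      "xs ! Suc i
        = shifted (chain_matching k i) (Rs ! i) (tau (gap_inst k) (chain_matching k i) (Rs ! i))"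
    using assms(1) i IH(1) by (auto simp: full_route_def)
  from is_rotation_chain_matching[OF IH(2) step(1)]
  have i2k: "i < 2*k" and cls: "rot_class (Rs ! i) = rot_class (rotation_at i)" by auto
  have "xs ! Suc i = shifted (chain_matching k i) (rotation_at i)
      (tau (gap_inst k) (chain_matching k i) (rotation_at i))"
    unfolding step(2) shifted_def tau_def shift_ok_def chi_rot_class[OF cls] ..
  also have "\<dots> = chain_matching k (Suc i)"
    using tau_rotation_at[OF i2k] shifted_rotation_at[OF i2k] by simp
  finally show ?case using i2k IH(3) cls less_Suc_eq by auto
qed

lemma full_route_gap_inst:
  assumes "full_route (gap_inst k) xs Rs"
  shows "length Rs = 2*k \<and> (\<forall>i<length Rs. rot_class (Rs ! i) = rot_class (rotation_at i))"
proof -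
  note at_end = full_route_gap_inst_nth[OF assms order_refl]
  have "xs \<noteq> []" "length xs = Suc (length Rs)" using assms by (auto simp: full_route_def)
  then have "last xs = chain_matching k (length Rs)" using at_end by (simp add: last_conv_nth)
  then have "length Rs = 2*k"
    using assms is_xmax_gap_inst_iff chain_matching_inj by (metis full_route_def)
  with at_end show ?thesis by blast
qed

lemma full_route_gap_inst_exists:
  "full_route (gap_inst k) (map (chain_matching k) [0..<Suc (2*k)]) (map rotation_at [0..<2*k])"
proof -
  have "last (map (chain_matching k) [0..<Suc (2*k)]) = chain_matching k (2*k)"
    by (simp del: upt_Suc add: upt_Suc_append)
  then show ?thesis
    unfolding full_route_def
    using rotation_at_is_rotation tau_rotation_at shifted_rotation_at
    by (simp add: is_xmin_gap_inst_iff is_xmax_gap_inst_iff nth_append del: upt_Suc)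
qed

lemma rot_class_rotation_at_0_1: "rot_class (rotation_at 0) \<noteq> rot_class (rotation_at 1)"
  by (simp add: rotation_at_def cut_edge_def gain_edge_def rot_class_pair doubleton_eq_iff)

lemma card_parity_below:
  "card {i. i < 2*k \<and> even i} = k" "card {i. i < 2*k \<and> odd i} = k"
proof -
  have "{i. i < 2*k \<and> even i} = (\<lambda>t. 2*t) ` {..<k}" by (auto elim!: evenE)
  moreover have "{i. i < 2*k \<and> odd i} = (\<lambda>t. 2*t + 1) ` {..<k}" by (auto elim!: oddE)
  ultimately show "card {i. i < 2*k \<and> even i} = k" "card {i. i < 2*k \<and> odd i} = k"
    by (simp_all add: card_image inj_on_def)
qed

lemma full_route_gap_inst_count:
  assumes "full_route (gap_inst k) xs Rs"
  shows "card {i. i < length Rs \<and> rot_class (Rs ! i) = X}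
    = (if X \<in> {rot_class (rotation_at 0), rot_class (rotation_at 1)} then k else 0)"
proof -
  define C0 C1 where "C0 = rot_class (rotation_at 0)" and "C1 = rot_class (rotation_at 1)"
  have distinct: "C0 \<noteq> C1" using rot_class_rotation_at_0_1 by (simp add: C0_def C1_def)
  have "{i. i < length Rs \<and> rot_class (Rs ! i) = X} = {i. i < 2*k \<and> rot_class (rotation_at i) = X}"
    using full_route_gap_inst[OF assms] by auto
  also have "\<dots> = {i. i < 2*k \<and> (if even i then C0 else C1) = X}"
  proof -
    have "rot_class (rotation_at i) = (if even i then C0 else C1)" for i
      by (simp add: C0_def C1_def rotation_at_def cut_edge_def gain_edge_def)
    then show ?thesis by (simp only:)
  qed
  finally have eq: "{i. i < length Rs \<and> rot_class (Rs ! i) = X}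
      = {i. i < 2*k \<and> (if even i then C0 else C1) = X}" .
  consider "X = C0" | "X = C1" | "X \<noteq> C0" "X \<noteq> C1" by blast
  then show ?thesis
  proof cases
    case 1
    then have "{i. i < 2*k \<and> (if even i then C0 else C1) = X} = {i. i < 2*k \<and> even i}"
      using distinct by auto
    then show ?thesis using eq 1 card_parity_below(1) by (simp add: C0_def)
  next
    case 2
    then have "{i. i < 2*k \<and> (if even i then C0 else C1) = X} = {i. i < 2*k \<and> odd i}"
      using distinct by auto
    then show ?thesis using eq 2 card_parity_below(2) by (simp add: C1_def)
  next
    case 3
    then have "{i. i < 2*k \<and> (if even i then C0 else C1) = X} = {}" by auto
    then show ?thesis using eq 3 by (simp add: C0_def C1_def)
  qed
qed

lemma rot_poset_gap_inst:
  "rot_poset (gap_inst k) = {rot_class (rotation_at 0), rot_class (rotation_at 1)} \<times> {1..k}"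
    (is "_ = ?classes \<times> _")
proof
  show "rot_poset (gap_inst k) \<subseteq> ?classes \<times> {1..k}"
  proof
    fix p assume "p \<in> rot_poset (gap_inst k)"
    then obtain R j xs Rs where p: "p = (rot_class R, j)" and route: "full_route (gap_inst k) xs Rs"
      and j: "1 \<le> j" "j \<le> card {i. i < length Rs \<and> rot_class (Rs ! i) = rot_class R}"
      unfolding rot_poset_def by blast
    have "rot_class R \<in> ?classes \<and> j \<le> k"
    proof (cases "rot_class R \<in> ?classes")
      case True
      then show ?thesis using j full_route_gap_inst_count[OF route, of "rot_class R"] by simp
    next
      case False
      then show ?thesis using j full_route_gap_inst_count[OF route, of "rot_class R"] by simp
    qed
    then show "p \<in> ?classes \<times> {1..k}" using p j(1) by simp
  qed
next
  show "?classes \<times> {1..k} \<subseteq> rot_poset (gap_inst k)"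
  proof
    fix p assume "p \<in> ?classes \<times> {1..k}"
    then obtain X j where p: "p = (X, j)" "X \<in> ?classes" "1 \<le> j" "j \<le> k"
      by (cases p) auto
    then obtain i where X: "X = rot_class (rotation_at i)" by blast
    let ?Rs = "map rotation_at [0..<2*k]"
    note route = full_route_gap_inst_exists[of k]
    have "j \<le> card {m. m < length ?Rs \<and> rot_class (?Rs ! m) = rot_class (rotation_at i)}"
      using p full_route_gap_inst_count[OF route, of X] X by simp
    then have "\<exists>xs Rs. full_route (gap_inst k) xs Rs \<and> 1 \<le> j \<and>
        j \<le> card {m. m < length Rs \<and> rot_class (Rs ! m) = rot_class (rotation_at i)}"
      using route p(3) by blast
    then show "p \<in> rot_poset (gap_inst k)"
      unfolding rot_poset_def p(1) X by blast
  qed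
qed

lemma card_rot_poset_gap_inst:
  "finite (rot_poset (gap_inst k)) \<and> card (rot_poset (gap_inst k)) = 2*k"
  using rot_class_rotation_at_0_1 by (simp add: rot_poset_gap_inst card_cartesian_product)

theorem corollary8p2:
  shows "\<exists>(W :: nat set) (F :: nat set) (E :: (nat \<times> nat) set).
           finite W \<and> finite F \<and> E \<subseteq> W \<times> F \<and>
           (\<exists>c1 c2 :: real. 0 < c1 \<and> c1 \<le> c2 \<and>
              (\<forall>N :: nat. \<exists>I :: (nat, nat) ginst.
                  Wv I = W \<and> Fv I = F \<and> Ed I = E \<and> valid_instance I \<and>
                  N \<le> bmax I \<and> finite (rot_poset I) \<and>
                  c1 * real (bmax I) \<le> real (card (rot_poset I)) \<and>
                  real (card (rot_poset I)) \<le> c2 * real (bmax I)))"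
proof -
  have "\<exists>I. Wv I = {2, 3, 4} \<and> Fv I = {2, 3} \<and> Ed I = gap_edges \<and> valid_instance I \<and>
      N \<le> bmax I \<and> finite (rot_poset I) \<and>
      1 * real (bmax I) \<le> real (card (rot_poset I)) \<and> real (card (rot_poset I)) \<le> 1 * real (bmax I)"
    for N
  proof -
    have "bmax (gap_inst (max N 1)) = 2 * max N 1" by (rule bmax_gap_inst) simp
    then show ?thesis
      using valid_gap_inst card_rot_poset_gap_inst by (intro exI[of _ "gap_inst (max N 1)"]) auto
  qed
  moreover have "gap_edges \<subseteq> {2, 3, 4} \<times> {2, 3}" by (auto simp: gap_edges_def)
  moreover have "finite {2, 3, 4 :: nat}" "finite {2, 3 :: nat}" "(0 :: real) < 1" by simp_all
  ultimately show ?thesis by blast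
qed

end
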